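(* Let $\mathcal P$ be a nilpotent presentation over $R$ (a field or $\mathbb Z$) on generators $a_1,\ldots,a_n$ with data $r_i,e_{i,k},b_{i,j,k}$ as in the context, let $c$ be its collection function, let $w$ be its weight function and $d=\max\{w(a_1),\ldots,w(a_n)\}$. Then $\mathcal P$ is consistent if and only if the following equations (test equations) hold in the free algebra: \begin{align*} c(a_k\,c(a_ja_i)) &= c(c(a_ka_j)\,a_i) && (1\le i,j,k\le n,\ w(a_k)+w(a_j)+w(a_i)\le d),\\ c(r_j\,c(a_ja_i)) &= c(c(r_ja_j)\,a_i) && (r_j<\infty,\ w(a_j)+w(a_i)\le d),\\ c(r_i\,c(a_ja_i)) &= c(a_j\,c(r_ia_i)) && (r_i<\infty,\ w(a_j)+w(a_i)\le d). \end{align*}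
   Context: $R$ is a field or the ring $\mathbb Z$; algebras are associative (not necessarily unital). A nilpotent presentation over $R$ on generators $a_1,\ldots,a_n$ consists of $r_1,\ldots,r_n\in\mathbb N\cup\{\infty\}$ (all equal to $\infty$ when $R$ is a field) and elements $e_{i,k},b_{i,j,k}\in R$ with $0\le e_{i,k},b_{i,j,k}<r_k$ whenever $r_k<\infty$, and has defining relations $r_ia_i=e_{i,i+1}a_{i+1}+\cdots+e_{i,n}a_n$ (for $r_i<\infty$) and $a_ja_i=b_{i,j,\ell+1}a_{\ell+1}+\cdots+b_{i,j,n}a_n$ for all $1\le i,j\le n$, where $\ell=\max\{i,j\}$ (coefficients $b_{i,j,k}$ with $k\le\ell$ are taken to be $0$). The presented algebra is $A=F/I$, where $F$ is the free associative $R$-algebra on $a_1,\ldots,a_n$ and $I$ the ideal generated by the differences of the two sides of the relations. A reduced form is an element $x_1a_1+\cdots+x_na_n$ with $x_i\in R$ and $0\le x_i<r_i$ when $r_i<\infty$. The collection function $c\colon F\to F$ maps each element of $F$ to a reduced form congruent to it modulo $I$, computed by the collection algorithm which uses linearity, rewrites products of generators $a_ja_i$ by the right-hand sides of the product relations, and reduces coefficients using the relations $r_ia_i=\ldots$. The presentation is consistent if every element of $A$ is represented by exactly one reduced form. The weight function $w\colon\{a_1,\ldots,a_n\}\to\mathbb N$ is the pointwise minimal function with $w(a_k)\ge w(a_i)$ whenever $e_{i,k}\ne0$ and $w(a_k)\ge w(a_i)+w(a_j)$ whenever $b_{i,j,k}\ne0$. *)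

theory Defs
  imports Main "HOL-Library.Poly_Mapping" "HOL-Library.Extended_Nat"
begin

text \<open>
  Data of a nilpotent presentation on generators a_1,...,a_n (indices 1..n):
  n :: nat, r :: nat => enat (r i = \<infinity> means no power relation),
  e i k (coefficient of a_k in the relation for r_i a_i),
  b i j k (coefficient of a_k in the product a_j a_i).
  Coefficients outside the relevant index ranges (k <= i resp. k <= max i j)
  are ignored, i.e. treated as 0.
  The free associative (non-unital) algebra F on a_1..a_n over R is represented
  by finitely supported functions from words (nat lists) to R, restricted to
  nonempty words over the letters 1..n.
\<close>

type_synonym 'r falg = "nat list \<Rightarrow>\<^sub>0 'r"

definition in_F :: "nat \<Rightarrow> 'r::zero falg \<Rightarrow> bool" where
  "in_F n f \<longleftrightarrow> (\<forall>w\<in>Poly_Mapping.keys f. w \<noteq> [] \<and> set w \<subseteq> {1..n})"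

definition gen :: "nat \<Rightarrow> 'r::comm_ring_1 falg" where
  "gen i = Poly_Mapping.single [i] 1"

definition fmul :: "'r::comm_ring_1 falg \<Rightarrow> 'r falg \<Rightarrow> 'r falg" where
  "fmul p q = (\<Sum>u\<in>Poly_Mapping.keys p. \<Sum>v\<in>Poly_Mapping.keys q. Poly_Mapping.single (u @ v) (Poly_Mapping.lookup p u * Poly_Mapping.lookup q v))"

definition smul :: "'r::comm_ring_1 \<Rightarrow> 'r falg \<Rightarrow> 'r falg" where
  "smul x p = (\<Sum>w\<in>Poly_Mapping.keys p. Poly_Mapping.single w (x * Poly_Mapping.lookup p w))"

definition in_range :: "enat \<Rightarrow> 'r::comm_ring_1 \<Rightarrow> bool" where
  "in_range m x \<longleftrightarrow> (case m of \<infinity> \<Rightarrow> True | enat t \<Rightarrow> x \<in> of_nat ` {0..<t})"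

text \<open>Nilpotent presentation over R. Here \<nat> is read as the positive integers,
  so finite r_i are >= 1.\<close>
definition nilpotent_presentation ::
  "nat \<Rightarrow> (nat \<Rightarrow> enat) \<Rightarrow> (nat \<Rightarrow> nat \<Rightarrow> 'r::comm_ring_1) \<Rightarrow> (nat \<Rightarrow> nat \<Rightarrow> nat \<Rightarrow> 'r) \<Rightarrow> bool" where
  "nilpotent_presentation n r e b \<longleftrightarrow>
     (\<forall>i\<in>{1..n}. r i \<noteq> 0) \<and>
     (\<forall>i\<in>{1..n}. \<forall>k. r i \<noteq> \<infinity> \<and> i < k \<and> k \<le> n \<longrightarrow> in_range (r k) (e i k)) \<and>
     (\<forall>i\<in>{1..n}. \<forall>j\<in>{1..n}. \<forall>k. max i j < k \<and> k \<le> n \<longrightarrow> in_range (r k) (b i j k))"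

definition power_rel :: "nat \<Rightarrow> (nat \<Rightarrow> enat) \<Rightarrow> (nat \<Rightarrow> nat \<Rightarrow> 'r::comm_ring_1) \<Rightarrow> nat \<Rightarrow> 'r falg" where
  "power_rel n r e i = smul (of_nat (the_enat (r i))) (gen i) - (\<Sum>k\<in>{i<..n}. smul (e i k) (gen k))"

definition product_rel :: "nat \<Rightarrow> (nat \<Rightarrow> nat \<Rightarrow> nat \<Rightarrow> 'r::comm_ring_1) \<Rightarrow> nat \<Rightarrow> nat \<Rightarrow> 'r falg" where
  "product_rel n b i j = fmul (gen j) (gen i) - (\<Sum>k\<in>{max i j<..n}. smul (b i j k) (gen k))"

definition relations :: "nat \<Rightarrow> (nat \<Rightarrow> enat) \<Rightarrow> (nat \<Rightarrow> nat \<Rightarrow> 'r::comm_ring_1) \<Rightarrow> (nat \<Rightarrow> nat \<Rightarrow> nat \<Rightarrow> 'r) \<Rightarrow> 'r falg set" where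
  "relations n r e b =
     {power_rel n r e i | i. i \<in> {1..n} \<and> r i \<noteq> \<infinity>} \<union>
     {product_rel n b i j | i j. i \<in> {1..n} \<and> j \<in> {1..n}}"

inductive_set ideal_gen :: "nat \<Rightarrow> 'r::comm_ring_1 falg set \<Rightarrow> 'r falg set" for n S where
  base: "s \<in> S \<Longrightarrow> s \<in> ideal_gen n S"
| zero: "0 \<in> ideal_gen n S"
| add: "x \<in> ideal_gen n S \<Longrightarrow> y \<in> ideal_gen n S \<Longrightarrow> x + y \<in> ideal_gen n S"
| scal: "x \<in> ideal_gen n S \<Longrightarrow> smul c x \<in> ideal_gen n S"
| mult_left: "x \<in> ideal_gen n S \<Longrightarrow> in_F n f \<Longrightarrow> fmul f x \<in> ideal_gen n S"
| mult_right: "x \<in> ideal_gen n S \<Longrightarrow> in_F n f \<Longrightarrow> fmul x f \<in> ideal_gen n S"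

definition pres_ideal where
  "pres_ideal n r e b = ideal_gen n (relations n r e b)"

definition lin :: "nat \<Rightarrow> (nat \<Rightarrow> 'r::comm_ring_1) \<Rightarrow> 'r falg" where
  "lin n x = (\<Sum>k\<in>{1..n}. smul (x k) (gen k))"

definition reduced_form :: "nat \<Rightarrow> (nat \<Rightarrow> enat) \<Rightarrow> 'r::comm_ring_1 falg \<Rightarrow> bool" where
  "reduced_form n r v \<longleftrightarrow> (\<exists>x. (\<forall>k\<in>{1..n}. in_range (r k) (x k)) \<and> v = lin n x)"

definition consistent ::
  "nat \<Rightarrow> (nat \<Rightarrow> enat) \<Rightarrow> (nat \<Rightarrow> nat \<Rightarrow> 'r::comm_ring_1) \<Rightarrow> (nat \<Rightarrow> nat \<Rightarrow> nat \<Rightarrow> 'r) \<Rightarrow> bool" where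
  "consistent n r e b \<longleftrightarrow>
     (\<forall>f. in_F n f \<longrightarrow> (\<exists>!v. reduced_form n r v \<and> f - v \<in> pres_ideal n r e b))"

text \<open>Coefficient vectors are functions nat => R (indices 1..n).
  Division with remainder x = m*q + s with s in {0,...,m-1} (unique in \<int>;
  only used when r_k is finite, i.e. for R = \<int>).\<close>
definition cdivmod :: "'r::comm_ring_1 \<Rightarrow> nat \<Rightarrow> 'r \<times> 'r" where
  "cdivmod x m = (THE (q, s). x = of_nat m * q + s \<and> s \<in> of_nat ` {0..<m})"

definition reduce_step ::
  "nat \<Rightarrow> (nat \<Rightarrow> enat) \<Rightarrow> (nat \<Rightarrow> nat \<Rightarrow> 'r::comm_ring_1) \<Rightarrow> nat \<Rightarrow> (nat \<Rightarrow> 'r) \<Rightarrow> (nat \<Rightarrow> 'r)" where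
  "reduce_step n r e k x =
     (case r k of \<infinity> \<Rightarrow> x
      | enat m \<Rightarrow> (let (q, s) = cdivmod (x k) m in
          (\<lambda>l. if l = k then s else if k < l \<and> l \<le> n then x l + q * e k l else x l)))"

text \<open>Reduce coefficients using r_k a_k = e_{k,k+1} a_{k+1} + ..., for k = 1, ..., n in turn.\<close>
definition reduce_vec ::
  "nat \<Rightarrow> (nat \<Rightarrow> enat) \<Rightarrow> (nat \<Rightarrow> nat \<Rightarrow> 'r::comm_ring_1) \<Rightarrow> (nat \<Rightarrow> 'r) \<Rightarrow> (nat \<Rightarrow> 'r)" where
  "reduce_vec n r e x = fold (reduce_step n r e) [1..<Suc n] x"

text \<open>(x_1 a_1 + ... + x_n a_n) a_i, rewritten by the product relations
  a_k a_i = b_{i,k,max i k+1} a_{max i k+1} + ... + b_{i,k,n} a_n.\<close>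
definition mul_gen_vec ::
  "nat \<Rightarrow> (nat \<Rightarrow> nat \<Rightarrow> nat \<Rightarrow> 'r::comm_ring_1) \<Rightarrow> (nat \<Rightarrow> 'r) \<Rightarrow> nat \<Rightarrow> (nat \<Rightarrow> 'r)" where
  "mul_gen_vec n b x i = (\<lambda>l. \<Sum>k\<in>{1..n}. x k * (if max i k < l \<and> l \<le> n then b i k l else 0))"

definition unit_vec :: "nat \<Rightarrow> nat \<Rightarrow> 'r::comm_ring_1" where
  "unit_vec i = (\<lambda>l. if l = i then 1 else 0)"

fun collect_word ::
  "nat \<Rightarrow> (nat \<Rightarrow> enat) \<Rightarrow> (nat \<Rightarrow> nat \<Rightarrow> 'r::comm_ring_1) \<Rightarrow> (nat \<Rightarrow> nat \<Rightarrow> nat \<Rightarrow> 'r) \<Rightarrow> nat list \<Rightarrow> (nat \<Rightarrow> 'r)" where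
  "collect_word n r e b [] = (\<lambda>_. 0)"
| "collect_word n r e b (i # w) =
     reduce_vec n r e (foldl (\<lambda>x j. reduce_vec n r e (mul_gen_vec n b x j)) (unit_vec i) w)"

definition collection ::
  "nat \<Rightarrow> (nat \<Rightarrow> enat) \<Rightarrow> (nat \<Rightarrow> nat \<Rightarrow> 'r::comm_ring_1) \<Rightarrow> (nat \<Rightarrow> nat \<Rightarrow> nat \<Rightarrow> 'r) \<Rightarrow> 'r falg \<Rightarrow> 'r falg" where
  "collection n r e b f =
     lin n (reduce_vec n r e (\<lambda>l. \<Sum>w\<in>Poly_Mapping.keys f. Poly_Mapping.lookup f w * collect_word n r e b w l))"

definition admissible_weight ::
  "nat \<Rightarrow> (nat \<Rightarrow> enat) \<Rightarrow> (nat \<Rightarrow> nat \<Rightarrow> 'r::comm_ring_1) \<Rightarrow> (nat \<Rightarrow> nat \<Rightarrow> nat \<Rightarrow> 'r) \<Rightarrow> (nat \<Rightarrow> nat) \<Rightarrow> bool" where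
  "admissible_weight n r e b w \<longleftrightarrow>
     (\<forall>k\<in>{1..n}. 1 \<le> w k) \<and>
     (\<forall>i\<in>{1..n}. \<forall>k. r i \<noteq> \<infinity> \<and> i < k \<and> k \<le> n \<and> e i k \<noteq> 0 \<longrightarrow> w i \<le> w k) \<and>
     (\<forall>i\<in>{1..n}. \<forall>j\<in>{1..n}. \<forall>k. max i j < k \<and> k \<le> n \<and> b i j k \<noteq> 0 \<longrightarrow> w i + w j \<le> w k)"

definition weight ::
  "nat \<Rightarrow> (nat \<Rightarrow> enat) \<Rightarrow> (nat \<Rightarrow> nat \<Rightarrow> 'r::comm_ring_1) \<Rightarrow> (nat \<Rightarrow> nat \<Rightarrow> nat \<Rightarrow> 'r) \<Rightarrow> nat \<Rightarrow> nat" where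
  "weight n r e b = (THE w. admissible_weight n r e b w \<and>
      (\<forall>w'. admissible_weight n r e b w' \<longrightarrow> (\<forall>k\<in>{1..n}. w k \<le> w' k)) \<and>
      (\<forall>k. k \<notin> {1..n} \<longrightarrow> w k = 0))"

definition max_weight where
  "max_weight n r e b = Max (weight n r e b ` {1..n})"

definition test_equations ::
  "nat \<Rightarrow> (nat \<Rightarrow> enat) \<Rightarrow> (nat \<Rightarrow> nat \<Rightarrow> 'r::comm_ring_1) \<Rightarrow> (nat \<Rightarrow> nat \<Rightarrow> nat \<Rightarrow> 'r) \<Rightarrow> bool" where
  "test_equations n r e b \<longleftrightarrow>
    (let c = collection n r e b; w = weight n r e b; d = max_weight n r e b;
         rr = (\<lambda>i. (of_nat (the_enat (r i)) :: 'r)); a = (gen :: nat \<Rightarrow> 'r falg) in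
     (\<forall>i\<in>{1..n}. \<forall>j\<in>{1..n}. \<forall>k\<in>{1..n}. w k + w j + w i \<le> d \<longrightarrow>
        c (fmul (a k) (c (fmul (a j) (a i)))) = c (fmul (c (fmul (a k) (a j))) (a i))) \<and>
     (\<forall>i\<in>{1..n}. \<forall>j\<in>{1..n}. r j \<noteq> \<infinity> \<and> w j + w i \<le> d \<longrightarrow>
        c (smul (rr j) (c (fmul (a j) (a i)))) = c (fmul (c (smul (rr j) (a j))) (a i))) \<and>
     (\<forall>i\<in>{1..n}. \<forall>j\<in>{1..n}. r i \<noteq> \<infinity> \<and> w j + w i \<le> d \<longrightarrow>
        c (smul (rr i) (c (fmul (a j) (a i)))) = c (fmul (a j) (c (smul (rr i) (a i))))))"

end

theory Submission
  imports Defs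
begin

(*
  Coefficient vectors x (read on the indices 1..n) stand for the reduced forms; the relations
  r_i a_i = e_{i,i+1} a_{i+1} + ... span a submodule L of such vectors. Since the power relations
  are triangular with diagonal r_i, two reduced vectors that are congruent modulo L are equal, so
  the presentation is consistent iff the collected vector of every element of the ideal I lies in L.

  The product relations define a bilinear product on coefficient vectors. Every structure
  constant raises the weight, so products of total weight above d vanish, and the test equations
  say exactly that the product, read modulo L, is associative on triples of generators and
  compatible with the power relations on either side in all remaining weights. By descending
  induction on the index of a power relation, L is a two-sided ideal for the product, and
  associativity extends trilinearly to all vectors. The collected vector of a word is then
  multiplicative modulo L, hence it maps the ideal I into L. Conversely, both sides of a test
  equation are collections of elements congruent modulo I, so consistency forces them to agree.
*)

section \<open>The free algebra\<close>

lemma lookup_smul: "Poly_Mapping.lookup (smul c p) w = c * Poly_Mapping.lookup p w"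
  unfolding smul_def lookup_sum by (auto simp: lookup_single in_keys_iff when_def)

lemma smul_add: "smul c (p + q) = smul c p + smul c q"
  by (rule poly_mapping_eqI) (simp add: lookup_smul lookup_add algebra_simps)

lemma smul_diff: "smul c (p - q) = smul c p - smul c q"
  by (rule poly_mapping_eqI) (simp add: lookup_smul lookup_minus algebra_simps)

lemma smul_zero [simp]: "smul c 0 = 0"
  by (rule poly_mapping_eqI) (simp add: lookup_smul)

lemma smul_single: "smul c (Poly_Mapping.single w a) = Poly_Mapping.single w (c * a)"
  by (rule poly_mapping_eqI) (simp add: lookup_smul lookup_single when_def)

lemma smul_sum: "smul c (sum f S) = (\<Sum>s\<in>S. smul c (f s))"
  by (induction S rule: infinite_finite_induct) (auto simp: smul_add)

lemma smul_minus_one: "smul (-1) p = - p"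
  by (rule poly_mapping_eqI) (simp add: lookup_smul)

lemma keys_smul: "Poly_Mapping.keys (smul c p) \<subseteq> Poly_Mapping.keys p"
  by (auto simp: in_keys_iff lookup_smul)

lemma poly_mapping_expand: "p = (\<Sum>w\<in>Poly_Mapping.keys p. Poly_Mapping.single w (Poly_Mapping.lookup p w))"
  by (rule poly_mapping_eqI) (simp add: lookup_sum lookup_single when_def in_keys_iff)

lemma fmul_superset:
  assumes "finite A" "Poly_Mapping.keys p \<subseteq> A" "finite B" "Poly_Mapping.keys q \<subseteq> B"
  shows "fmul p q = (\<Sum>u\<in>A. \<Sum>v\<in>B.
           Poly_Mapping.single (u @ v) (Poly_Mapping.lookup p u * Poly_Mapping.lookup q v))"
  unfolding fmul_def
  by (rule sum.mono_neutral_cong_left[OF assms(1,2)], simp add: in_keys_iff,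
      rule sum.mono_neutral_left[OF assms(3,4)]) (auto simp: in_keys_iff)

lemma fmul_add_left: "fmul (p + p') q = fmul p q + fmul p' q"
  by (subst (1 2 3) fmul_superset[of "Poly_Mapping.keys p \<union> Poly_Mapping.keys p' \<union> Poly_Mapping.keys (p + p')"
        _ "Poly_Mapping.keys q"])
     (auto simp: lookup_add distrib_right single_add sum.distrib)

lemma fmul_add_right: "fmul p (q + q') = fmul p q + fmul p q'"
  by (subst (1 2 3) fmul_superset[of "Poly_Mapping.keys p" _
        "Poly_Mapping.keys q \<union> Poly_Mapping.keys q' \<union> Poly_Mapping.keys (q + q')"])
     (auto simp: lookup_add distrib_left single_add sum.distrib)

lemma fmul_smul_left: "fmul (smul c p) q = smul c (fmul p q)"
  by (subst fmul_superset[OF finite_keys keys_smul finite_keys subset_refl])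
     (simp add: fmul_def smul_sum smul_single lookup_smul mult.assoc)

lemma fmul_smul_right: "fmul p (smul c q) = smul c (fmul p q)"
  by (subst fmul_superset[OF finite_keys subset_refl finite_keys keys_smul])
     (simp add: fmul_def smul_sum smul_single lookup_smul algebra_simps)

lemma fmul_zero_left [simp]: "fmul 0 q = 0"
  by (simp add: fmul_def)

lemma fmul_zero_right [simp]: "fmul p 0 = 0"
  by (simp add: fmul_def)

lemma fmul_diff_left: "fmul (p - p') q = fmul p q - fmul p' q"
  by (metis add_diff_cancel_right' diff_add_cancel fmul_add_left)

lemma fmul_diff_right: "fmul p (q - q') = fmul p q - fmul p q'"
  by (metis add_diff_cancel_right' diff_add_cancel fmul_add_right)

lemma fmul_sum_left: "fmul (sum f S) q = (\<Sum>s\<in>S. fmul (f s) q)"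
  by (induction S rule: infinite_finite_induct) (auto simp: fmul_add_left)

lemma fmul_sum_right: "fmul p (sum f S) = (\<Sum>s\<in>S. fmul p (f s))"
  by (induction S rule: infinite_finite_induct) (auto simp: fmul_add_right)

lemma fmul_single: "fmul (Poly_Mapping.single u a) (Poly_Mapping.single v c) = Poly_Mapping.single (u @ v) (a * c)"
  by (simp add: fmul_def)

lemma fmul_single_right:
  "fmul p (Poly_Mapping.single w c) =
     (\<Sum>u\<in>Poly_Mapping.keys p. Poly_Mapping.single (u @ w) (Poly_Mapping.lookup p u * c))"
  by (subst fmul_superset[OF finite_keys subset_refl, of "{w}"]) auto

lemma fmul_Nil_right: "fmul p (Poly_Mapping.single [] 1) = p"
  unfolding fmul_single_right by (simp, rule poly_mapping_expand[symmetric])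

lemma fmul_single_right_append:
  "fmul (fmul p (Poly_Mapping.single w 1)) (Poly_Mapping.single v 1) = fmul p (Poly_Mapping.single (w @ v) 1)"
  by (simp add: fmul_single_right[of p] fmul_sum_left fmul_single)

lemma keys_fmul:
  "Poly_Mapping.keys (fmul p q) \<subseteq> {u @ v | u v. u \<in> Poly_Mapping.keys p \<and> v \<in> Poly_Mapping.keys q}"
  unfolding fmul_def
  by (rule order.trans[OF keys_sum], rule UN_least, rule order.trans[OF keys_sum]) auto

lemma fmul_gen_gen: "fmul (gen k) (gen i) = Poly_Mapping.single [k, i] 1"
  unfolding gen_def fmul_single by simp

lemma lookup_gen: "Poly_Mapping.lookup (gen k) w = (if w = [k] then 1 else 0)"
  unfolding gen_def by (simp add: lookup_single when_def)

lemma lookup_sum_smul_gen: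
  assumes "finite K"
  shows "Poly_Mapping.lookup (\<Sum>k\<in>K. smul (x k) (gen k)) w = (if \<exists>m\<in>K. w = [m] then x (hd w) else 0)"
  using assms by (auto simp: lookup_sum lookup_smul lookup_gen if_distrib[of "\<lambda>c. _ * c"] cong: if_cong)

lemma in_F_add: "in_F n p \<Longrightarrow> in_F n q \<Longrightarrow> in_F n (p + q)"
  unfolding in_F_def using keys_add[of p q] by blast

lemma in_F_smul: "in_F n p \<Longrightarrow> in_F n (smul c p)"
  unfolding in_F_def using keys_smul[of c p] by blast

lemma in_F_diff: "in_F n p \<Longrightarrow> in_F n q \<Longrightarrow> in_F n (p - q)"
  unfolding in_F_def using keys_diff[of p q] by blast

lemma in_F_zero [simp]: "in_F n 0"
  unfolding in_F_def by simp

lemma in_F_sum: "(\<And>s. s \<in> S \<Longrightarrow> in_F n (f s)) \<Longrightarrow> in_F n (sum f S)"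
  by (induction S rule: infinite_finite_induct) (auto intro: in_F_add)

lemma in_F_fmul: "in_F n p \<Longrightarrow> in_F n q \<Longrightarrow> in_F n (fmul p q)"
  unfolding in_F_def using keys_fmul[of p q] by fastforce

lemma in_F_gen: "i \<in> {1..n} \<Longrightarrow> in_F n (gen i)"
  unfolding in_F_def gen_def by simp

lemma in_F_lin: "in_F n (lin n x)"
  unfolding lin_def by (auto intro!: in_F_sum in_F_smul in_F_gen)

lemma lookup_lin: "Poly_Mapping.lookup (lin n x) w = (if \<exists>m\<in>{1..n}. w = [m] then x (hd w) else 0)"
  unfolding lin_def by (rule lookup_sum_smul_gen) simp

section \<open>Weights\<close>

lemma admissible_weight_pow2: "admissible_weight n r e b (\<lambda>k. 2 ^ k)"
proof -
  have "(2::nat) ^ i + 2 ^ j \<le> 2 ^ k" if "max i j < k" for i j k :: nat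
  proof -
    have "(2::nat) ^ i \<le> 2 ^ (k - 1)" "(2::nat) ^ j \<le> 2 ^ (k - 1)"
      using that by (auto intro!: power_increasing)
    moreover have "(2::nat) ^ k = 2 * 2 ^ (k - 1)"
      using that by (metis Suc_diff_1 gr_implies_not0 not_gr0 power_Suc)
    ultimately show ?thesis by linarith
  qed
  moreover have "(2::nat) ^ i \<le> 2 ^ k" if "i < k" for i k :: nat
    using that by (auto intro!: power_increasing)
  ultimately show ?thesis unfolding admissible_weight_def by auto
qed

definition least_admissible_weight ::
  "nat \<Rightarrow> (nat \<Rightarrow> enat) \<Rightarrow> (nat \<Rightarrow> nat \<Rightarrow> 'r::comm_ring_1) \<Rightarrow> (nat \<Rightarrow> nat \<Rightarrow> nat \<Rightarrow> 'r) \<Rightarrow> nat \<Rightarrow> nat" where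
  "least_admissible_weight n r e b k =
     (if k \<in> {1..n} then LEAST m. \<exists>w. admissible_weight n r e b w \<and> w k = m else 0)"

lemma least_admissible_weight_attained:
  assumes "k \<in> {1..n}"
  shows "\<exists>w. admissible_weight n r e b w \<and> w k = least_admissible_weight n r e b k"
proof -
  have "\<exists>m w. admissible_weight n r e b w \<and> w k = m"
    using admissible_weight_pow2 by blast
  from LeastI_ex[OF this] show ?thesis
    using assms unfolding least_admissible_weight_def by simp
qed

lemma least_admissible_weight_le:
  "admissible_weight n r e b w \<Longrightarrow> k \<in> {1..n} \<Longrightarrow> least_admissible_weight n r e b k \<le> w k"
  unfolding least_admissible_weight_def by (auto intro: Least_le)

lemma least_admissible_weight_outside: "k \<notin> {1..n} \<Longrightarrow> least_admissible_weight n r e b k = 0"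
  unfolding least_admissible_weight_def by auto

lemma admissible_least_admissible_weight:
  "admissible_weight n r e b (least_admissible_weight n r e b)"
  (is "admissible_weight n r e b ?w")
  unfolding admissible_weight_def
proof (intro conjI ballI allI impI)
  fix k assume k: "k \<in> {1..n}"
  obtain w where w: "admissible_weight n r e b w" "w k = ?w k"
    using least_admissible_weight_attained[OF k] by blast
  have "1 \<le> w k" using w(1) k unfolding admissible_weight_def by blast
  with w(2) show "1 \<le> ?w k" by simp
next
  fix i k assume i: "i \<in> {1..n}" and h: "r i \<noteq> \<infinity> \<and> i < k \<and> k \<le> n \<and> e i k \<noteq> 0"
  obtain w where w: "admissible_weight n r e b w" "w k = ?w k"
    using least_admissible_weight_attained[of k n r e b] h i by auto
  have "?w i \<le> w i" by (rule least_admissible_weight_le[OF w(1) i])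
  also have "w i \<le> w k" using w(1) i h unfolding admissible_weight_def by blast
  finally show "?w i \<le> ?w k" using w(2) by simp
next
  fix i j k assume i: "i \<in> {1..n}" and j: "j \<in> {1..n}" and h: "max i j < k \<and> k \<le> n \<and> b i j k \<noteq> 0"
  obtain w where w: "admissible_weight n r e b w" "w k = ?w k"
    using least_admissible_weight_attained[of k n r e b] h i by auto
  have "?w i + ?w j \<le> w i + w j"
    using least_admissible_weight_le[OF w(1)] i j by (simp add: add_mono)
  also have "w i + w j \<le> w k" using w(1) i j h unfolding admissible_weight_def by blast
  finally show "?w i + ?w j \<le> ?w k" using w(2) by simp
qed

lemma weight_eq_least_admissible_weight: "weight n r e b = least_admissible_weight n r e b"
  unfolding weight_def
proof (rule the_equality)
  show "admissible_weight n r e b (least_admissible_weight n r e b) \<and>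
    (\<forall>w'. admissible_weight n r e b w' \<longrightarrow> (\<forall>k\<in>{1..n}. least_admissible_weight n r e b k \<le> w' k)) \<and>
    (\<forall>k. k \<notin> {1..n} \<longrightarrow> least_admissible_weight n r e b k = 0)"
    using admissible_least_admissible_weight least_admissible_weight_le least_admissible_weight_outside
    by blast
next
  fix w assume h: "admissible_weight n r e b w \<and>
    (\<forall>w'. admissible_weight n r e b w' \<longrightarrow> (\<forall>k\<in>{1..n}. w k \<le> w' k)) \<and> (\<forall>k. k \<notin> {1..n} \<longrightarrow> w k = 0)"
  show "w = least_admissible_weight n r e b"
  proof
    fix k show "w k = least_admissible_weight n r e b k"
      using h admissible_least_admissible_weight least_admissible_weight_le[of n r e b w k]
      by (cases "k \<in> {1..n}") (force, simp add: least_admissible_weight_outside)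
  qed
qed

lemma admissible_weight_weight: "admissible_weight n r e b (weight n r e b)"
  unfolding weight_eq_least_admissible_weight by (rule admissible_least_admissible_weight)

section \<open>Coefficient vectors modulo the power relations\<close>

text \<open>The only property of the coefficient ring used below: division with remainder by a finite
  \<open>r\<^sub>k\<close> has a unique result. It holds for \<open>\<int>\<close> when \<open>r\<^sub>k > 0\<close>, and vacuously over a field,
  where all \<open>r\<^sub>k = \<infinity>\<close>.\<close>

locale presentation =
  fixes n :: nat and r :: "nat \<Rightarrow> enat" and e :: "nat \<Rightarrow> nat \<Rightarrow> 'r::comm_ring_1"
    and b :: "nat \<Rightarrow> nat \<Rightarrow> nat \<Rightarrow> 'r"
  assumes unique_division: "\<And>k m x. k \<in> {1..n} \<Longrightarrow> r k = enat m \<Longrightarrow>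
     \<exists>!p. (x::'r) = of_nat m * fst p + snd p \<and> snd p \<in> of_nat ` {0..<m}"
begin

lemma cdivmod_correct:
  fixes x :: 'r
  assumes "k \<in> {1..n}" "r k = enat m"
  shows "x = of_nat m * fst (cdivmod x m) + snd (cdivmod x m) \<and> snd (cdivmod x m) \<in> of_nat ` {0..<m}"
proof -
  have "\<exists>!p. (case p of (q, s) \<Rightarrow> x = of_nat m * q + s \<and> s \<in> of_nat ` {0..<m})"
    using unique_division[OF assms, of x] by (simp add: split_def)
  from theI'[OF this] show ?thesis unfolding cdivmod_def by (simp add: split_def)
qed

lemma cdivmod_unique:
  fixes x :: 'r
  assumes "k \<in> {1..n}" "r k = enat m" "x = of_nat m * q + s" "s \<in> of_nat ` {0..<m}"
  shows "cdivmod x m = (q, s)"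
  using unique_division[OF assms(1,2), of x] cdivmod_correct[OF assms(1,2), of x] assms(3,4)
  by (metis prod.collapse fst_conv snd_conv)

lemma remainder_unique:
  fixes q s :: 'r
  assumes "k \<in> {1..n}" "r k = enat m" "of_nat m * q + s = of_nat m * q' + s'"
    "s \<in> of_nat ` {0..<m}" "s' \<in> of_nat ` {0..<m}"
  shows "q = q' \<and> s = s'"
  using cdivmod_unique[OF assms(1,2) refl assms(4)] cdivmod_unique[OF assms(1,2,3,5)] by simp

lemma power_positive: "k \<in> {1..n} \<Longrightarrow> r k = enat m \<Longrightarrow> 0 < m"
  using unique_division[of k m 0] by (cases m) auto

text \<open>A coefficient vector \<open>x\<close> stands for \<open>x\<^sub>1 a\<^sub>1 + \<dots> + x\<^sub>n a\<^sub>n\<close>; its other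
  coordinates are ignored. \<open>power_vec i\<close> is the power relation of \<open>a\<^sub>i\<close>.\<close>

definition power_vec :: "nat \<Rightarrow> nat \<Rightarrow> 'r" where
  "power_vec i l = (if l = i then of_nat (the_enat (r i)) else if i < l \<and> l \<le> n then - e i l else 0)"

definition power_idx :: "nat \<Rightarrow> nat set" where
  "power_idx t = {i \<in> {1..n}. r i \<noteq> \<infinity> \<and> t < i}"

definition in_power_span :: "nat \<Rightarrow> (nat \<Rightarrow> 'r) \<Rightarrow> bool" where
  "in_power_span t z \<longleftrightarrow> (\<exists>c. \<forall>l\<in>{1..n}. z l = (\<Sum>i\<in>power_idx t. c i * power_vec i l))"

definition coeff_eq :: "(nat \<Rightarrow> 'r) \<Rightarrow> (nat \<Rightarrow> 'r) \<Rightarrow> bool" where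
  "coeff_eq x y \<longleftrightarrow> (\<forall>l\<in>{1..n}. x l = y l)"

definition power_cong :: "(nat \<Rightarrow> 'r) \<Rightarrow> (nat \<Rightarrow> 'r) \<Rightarrow> bool" where
  "power_cong x y \<longleftrightarrow> in_power_span 0 (\<lambda>l. x l - y l)"

definition reduced_vec :: "(nat \<Rightarrow> 'r) \<Rightarrow> bool" where
  "reduced_vec x \<longleftrightarrow> (\<forall>k\<in>{1..n}. in_range (r k) (x k))"

lemma finite_power_idx [simp]: "finite (power_idx t)"
  unfolding power_idx_def by simp

lemma in_power_span_zero: "in_power_span t (\<lambda>_. 0)"
  unfolding in_power_span_def by (rule exI[of _ "\<lambda>_. 0"]) simp

lemma in_power_span_coeff_eq: "in_power_span t z \<Longrightarrow> coeff_eq z z' \<Longrightarrow> in_power_span t z'"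
  unfolding in_power_span_def coeff_eq_def by auto

lemma in_power_span_if_coeff_eq_zero: "coeff_eq z (\<lambda>_. 0) \<Longrightarrow> in_power_span t z"
  using in_power_span_coeff_eq[OF in_power_span_zero] unfolding coeff_eq_def by auto

lemma in_power_span_add:
  assumes "in_power_span t x" "in_power_span t y"
  shows "in_power_span t (\<lambda>l. x l + y l)"
proof -
  obtain c d where "\<forall>l\<in>{1..n}. x l = (\<Sum>i\<in>power_idx t. c i * power_vec i l)"
    and "\<forall>l\<in>{1..n}. y l = (\<Sum>i\<in>power_idx t. d i * power_vec i l)"
    using assms unfolding in_power_span_def by blast
  then show ?thesis unfolding in_power_span_def
    by (intro exI[of _ "\<lambda>i. c i + d i"]) (simp add: distrib_right sum.distrib)
qed

lemma in_power_span_scale: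
  assumes "in_power_span t x"
  shows "in_power_span t (\<lambda>l. a * x l)"
proof -
  obtain c where "\<forall>l\<in>{1..n}. x l = (\<Sum>i\<in>power_idx t. c i * power_vec i l)"
    using assms unfolding in_power_span_def by blast
  then show ?thesis unfolding in_power_span_def
    by (intro exI[of _ "\<lambda>i. a * c i"]) (simp add: sum_distrib_left mult.assoc)
qed

lemma in_power_span_neg: "in_power_span t x \<Longrightarrow> in_power_span t (\<lambda>l. - x l)"
  using in_power_span_scale[of t x "-1"] by simp

lemma in_power_span_diff:
  "in_power_span t x \<Longrightarrow> in_power_span t y \<Longrightarrow> in_power_span t (\<lambda>l. x l - y l)"
  using in_power_span_add[of t x "\<lambda>l. - y l"] in_power_span_neg[of t y] by simp

lemma in_power_span_lincomb:
  "(\<And>s. s \<in> S \<Longrightarrow> in_power_span t (f s)) \<Longrightarrow> in_power_span t (\<lambda>l. \<Sum>s\<in>S. c s * f s l)"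
proof (induction S rule: infinite_finite_induct)
  case (insert s S)
  then show ?case
    using in_power_span_add[OF in_power_span_scale[of t "f s" "c s"]] by simp
qed (simp_all add: in_power_span_zero)

lemma power_vec_in_power_span: "i \<in> power_idx t \<Longrightarrow> in_power_span t (power_vec i)"
  unfolding in_power_span_def
  by (rule exI[of _ "\<lambda>j. if j = i then 1 else 0"]) (simp add: if_distrib[of "\<lambda>c. c * _"] cong: if_cong)

lemma power_cong_sym: "power_cong x y \<Longrightarrow> power_cong y x"
  unfolding power_cong_def using in_power_span_neg[of 0 "\<lambda>l. x l - y l"] by simp

lemma power_cong_trans [trans]: "power_cong x y \<Longrightarrow> power_cong y z \<Longrightarrow> power_cong x z"
  unfolding power_cong_def using in_power_span_add[of 0 "\<lambda>l. x l - y l" "\<lambda>l. y l - z l"] by simp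

lemma power_cong_if_coeff_eq: "coeff_eq x y \<Longrightarrow> power_cong x y"
  unfolding power_cong_def by (rule in_power_span_if_coeff_eq_zero) (simp add: coeff_eq_def)

lemma power_cong_lincomb:
  "(\<And>s. s \<in> S \<Longrightarrow> power_cong (f s) (g s)) \<Longrightarrow>
     power_cong (\<lambda>l. \<Sum>s\<in>S. c s * f s l) (\<lambda>l. \<Sum>s\<in>S. c s * g s l)"
  unfolding power_cong_def using in_power_span_lincomb[of S 0 "\<lambda>s l. f s l - g s l" c]
  by (simp add: right_diff_distrib sum_subtractf)

lemma power_cong_diff:
  "power_cong x x' \<Longrightarrow> power_cong y y' \<Longrightarrow> power_cong (\<lambda>l. x l - y l) (\<lambda>l. x' l - y' l)"
  unfolding power_cong_def using in_power_span_diff[of 0 "\<lambda>l. x l - x' l" "\<lambda>l. y l - y' l"] by (simp add: algebra_simps)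

lemma power_cong_scale: "power_cong x x' \<Longrightarrow> power_cong (\<lambda>l. a * x l) (\<lambda>l. a * x' l)"
  unfolding power_cong_def using in_power_span_scale[of 0 "\<lambda>l. x l - x' l" a] by (simp add: algebra_simps)

lemma in_power_span_power_cong: "power_cong x y \<Longrightarrow> in_power_span 0 y \<Longrightarrow> in_power_span 0 x"
  unfolding power_cong_def using in_power_span_add[of 0 "\<lambda>l. x l - y l" y] by simp

abbreviation red_step where "red_step \<equiv> reduce_step n r e"
abbreviation red where "red \<equiv> reduce_vec n r e"

lemma red_step_infinite: "r k = \<infinity> \<Longrightarrow> red_step k x = x"
  unfolding reduce_step_def by simp

lemma red_step_finite:
  "r k = enat m \<Longrightarrow> red_step k x = (\<lambda>l. if l = k then snd (cdivmod (x k) m)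
     else if k < l \<and> l \<le> n then x l + fst (cdivmod (x k) m) * e k l else x l)"
  unfolding reduce_step_def by (simp add: split_def Let_def)

lemma red_step_below: "l < k \<Longrightarrow> red_step k x l = x l"
  by (cases "r k") (auto simp: red_step_infinite red_step_finite)

lemma red_step_id: "k \<in> {1..n} \<Longrightarrow> in_range (r k) (x k) \<Longrightarrow> red_step k x = x"
proof (cases "r k")
  case (enat m)
  assume "k \<in> {1..n}" "in_range (r k) (x k)"
  then have "cdivmod (x k) m = (0, x k)"
    using enat by (intro cdivmod_unique) (auto simp: in_range_def)
  then show ?thesis using enat by (simp add: red_step_finite fun_eq_iff)
qed (simp add: red_step_infinite)

lemma red_step_in_range: "k \<in> {1..n} \<Longrightarrow> in_range (r k) (red_step k x k)"
  using cdivmod_correct[of k]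
  by (cases "r k") (auto simp: red_step_finite in_range_def)

lemma red_step_diff:
  assumes "k \<in> {1..n}" "r k = enat m"
  shows "(\<lambda>l. x l - red_step k x l) = (\<lambda>l. fst (cdivmod (x k) m) * power_vec k l)"
  using cdivmod_correct[OF assms, of "x k"] assms(2)
  by (auto simp: red_step_finite power_vec_def algebra_simps fun_eq_iff)

lemma red_step_diff_in_power_span:
  assumes "k \<in> {1..n}" "t < k"
  shows "in_power_span t (\<lambda>l. x l - red_step k x l)"
proof (cases "r k")
  case (enat m)
  have "k \<in> power_idx t" using assms enat unfolding power_idx_def by auto
  then show ?thesis
    unfolding red_step_diff[OF assms(1) enat] by (intro in_power_span_scale power_vec_in_power_span)
qed (simp add: red_step_infinite in_power_span_zero)

text \<open>Coordinates that already vanish are left alone by the reduction, so only the power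
  relations of higher index are used.\<close>

lemma fold_red_step_diff_in_power_span:
  assumes "set ks \<subseteq> {1..n}" "\<And>k. 1 \<le> k \<Longrightarrow> k \<le> t \<Longrightarrow> x k = 0"
  shows "in_power_span t (\<lambda>l. x l - fold red_step ks x l)"
  using assms
proof (induction ks arbitrary: x)
  case (Cons k ks)
  then have k: "k \<in> {1..n}" by simp
  show ?case
  proof (cases "k \<le> t")
    case True
    then have "in_range (r k) (x k)"
      using Cons.prems(2) k power_positive[OF k]
      unfolding in_range_def by (cases "r k") (auto intro: image_eqI[of 0 _ 0])
    then show ?thesis using Cons red_step_id[OF k] by simp
  next
    case False
    have "in_power_span t (\<lambda>l. red_step k x l - fold red_step ks (red_step k x) l)"
      using Cons False by (intro Cons.IH) (auto simp: red_step_below)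
    with red_step_diff_in_power_span[OF k, of t x] False show ?thesis
      using in_power_span_add by fastforce
  qed
qed (simp add: in_power_span_zero)

lemma reduce_diff_in_power_span:
  "(\<And>k. 1 \<le> k \<Longrightarrow> k \<le> t \<Longrightarrow> x k = 0) \<Longrightarrow> in_power_span t (\<lambda>l. x l - red x l)"
  unfolding reduce_vec_def by (rule fold_red_step_diff_in_power_span) auto

lemma power_cong_reduce: "power_cong x (red x)"
  unfolding power_cong_def by (rule reduce_diff_in_power_span) simp

lemma reduced_vec_reduce: "reduced_vec (red x)"
proof -
  have "\<forall>k\<in>{1..m}. in_range (r k) (fold red_step [1..<Suc m] x k)" if "m \<le> n" for m
    using that
  proof (induction m)
    case (Suc m)
    show ?case
    proof
      fix k assume k: "k \<in> {1..Suc m}"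
      show "in_range (r k) (fold red_step [1..<Suc (Suc m)] x k)"
        using k Suc red_step_in_range[of "Suc m"] red_step_below[of k "Suc m"]
        by (cases "k = Suc m") auto
    qed
  qed simp
  then show ?thesis unfolding reduced_vec_def reduce_vec_def by simp
qed

lemma power_lincomb_at_triangular:
  assumes "\<And>i. i \<in> power_idx 0 \<Longrightarrow> i < l \<Longrightarrow> c i = 0"
  shows "(\<Sum>i\<in>power_idx 0. c i * power_vec i l) =
           (if l \<in> power_idx 0 then c l * of_nat (the_enat (r l)) else 0)"
proof -
  have "c i * power_vec i l = (if l = i then c l * of_nat (the_enat (r l)) else 0)"
    if "i \<in> power_idx 0" for i
  proof (cases i l rule: linorder_cases)
    case less
    then show ?thesis using assms[OF that] by simp
  qed (simp_all add: power_vec_def)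
  then show ?thesis by (simp cong: sum.cong)
qed

text \<open>The power relations are triangular with diagonal entries \<open>r\<^sub>i\<close>, and reduced coefficients
  are remainders modulo \<open>r\<^sub>i\<close>; so coefficients can be compared from the lowest index upwards.\<close>

lemma reduced_vec_power_cong_unique:
  assumes x: "reduced_vec x" and y: "reduced_vec y" and "power_cong x y"
  shows "coeff_eq x y"
proof -
  obtain c where c: "\<forall>l\<in>{1..n}. x l - y l = (\<Sum>i\<in>power_idx 0. c i * power_vec i l)"
    using assms(3) unfolding power_cong_def in_power_span_def by blast
  have "l \<in> {1..n} \<longrightarrow> x l = y l \<and> (l \<in> power_idx 0 \<longrightarrow> c l = 0)" for l
  proof (induction l rule: less_induct)
    case (less l)
    show ?case
    proof
      assume l: "l \<in> {1..n}"
      have "\<And>i. i \<in> power_idx 0 \<Longrightarrow> i < l \<Longrightarrow> c i = 0"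
        using less.IH unfolding power_idx_def by blast
      then have xy: "x l - y l = (if l \<in> power_idx 0 then c l * of_nat (the_enat (r l)) else 0)"
        using c l by (simp only: power_lincomb_at_triangular)
      show "x l = y l \<and> (l \<in> power_idx 0 \<longrightarrow> c l = 0)"
      proof (cases "l \<in> power_idx 0")
        case True
        then obtain m where m: "r l = enat m" unfolding power_idx_def by auto
        have "in_range (r l) (x l)" "in_range (r l) (y l)"
          using x y l unfolding reduced_vec_def by auto
        then have "x l \<in> of_nat ` {0..<m}" "y l \<in> of_nat ` {0..<m}"
          using m unfolding in_range_def by auto
        moreover have "of_nat m * 0 + x l = of_nat m * c l + y l"
          using xy True m by (simp add: mult.commute diff_eq_eq)
        ultimately have "0 = c l \<and> x l = y l" using remainder_unique[OF l m] by blast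
        then show ?thesis by simp
      qed (use xy in simp)
    qed
  qed
  then show ?thesis unfolding coeff_eq_def by blast
qed

lemma coeff_eq_reduce_iff: "coeff_eq (red x) (red y) \<longleftrightarrow> power_cong x y"
proof
  assume "coeff_eq (red x) (red y)"
  then show "power_cong x y"
    using power_cong_trans[OF power_cong_reduce power_cong_trans[OF power_cong_if_coeff_eq
        power_cong_sym[OF power_cong_reduce]]] by blast
next
  assume "power_cong x y"
  then show "coeff_eq (red x) (red y)"
    by (intro reduced_vec_power_cong_unique reduced_vec_reduce
        power_cong_trans[OF power_cong_sym[OF power_cong_reduce]] power_cong_trans[OF _ power_cong_reduce])
qed

section \<open>The product of coefficient vectors\<close>

definition struct_vec :: "nat \<Rightarrow> nat \<Rightarrow> nat \<Rightarrow> 'r" where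
  "struct_vec i k l = (if max i k < l \<and> l \<le> n then b i k l else 0)"

text \<open>\<open>vmul x y\<close> is the product \<open>(\<Sum>\<^sub>k x\<^sub>k a\<^sub>k)(\<Sum>\<^sub>i y\<^sub>i a\<^sub>i)\<close> with every \<open>a\<^sub>k a\<^sub>i\<close> rewritten by
  its product relation, before any reduction of coefficients.\<close>

definition vmul :: "(nat \<Rightarrow> 'r) \<Rightarrow> (nat \<Rightarrow> 'r) \<Rightarrow> nat \<Rightarrow> 'r" where
  "vmul x y = (\<lambda>l. \<Sum>i\<in>{1..n}. y i * mul_gen_vec n b x i l)"

lemma mul_gen_vec_eq: "mul_gen_vec n b x i l = (\<Sum>k\<in>{1..n}. x k * struct_vec i k l)"
  unfolding mul_gen_vec_def struct_vec_def by simp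

lemma vmul_expand: "vmul x y l = (\<Sum>i\<in>{1..n}. \<Sum>k\<in>{1..n}. y i * x k * struct_vec i k l)"
  unfolding vmul_def mul_gen_vec_eq by (simp add: sum_distrib_left mult.assoc)

lemma vmul_coeff_eq: "coeff_eq x x' \<Longrightarrow> coeff_eq y y' \<Longrightarrow> vmul x y = vmul x' y'"
  unfolding coeff_eq_def by (auto simp: fun_eq_iff vmul_expand intro!: sum.cong)

lemma vmul_lincomb_left: "vmul (\<lambda>l. \<Sum>s\<in>S. c s * v s l) y = (\<lambda>l. \<Sum>s\<in>S. c s * vmul (v s) y l)"
proof
  fix l
  have "vmul (\<lambda>l. \<Sum>s\<in>S. c s * v s l) y l =
      (\<Sum>i\<in>{1..n}. \<Sum>k\<in>{1..n}. \<Sum>s\<in>S. c s * (y i * v s k * struct_vec i k l))"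
    unfolding vmul_expand by (simp add: sum_distrib_left sum_distrib_right mult_ac)
  also have "\<dots> = (\<Sum>s\<in>S. \<Sum>i\<in>{1..n}. \<Sum>k\<in>{1..n}. c s * (y i * v s k * struct_vec i k l))"
    by (simp only: sum.swap[of _ S])
  also have "\<dots> = (\<Sum>s\<in>S. c s * vmul (v s) y l)"
    unfolding vmul_expand by (simp add: sum_distrib_left)
  finally show "vmul (\<lambda>l. \<Sum>s\<in>S. c s * v s l) y l = (\<Sum>s\<in>S. c s * vmul (v s) y l)" .
qed

lemma vmul_lincomb_right: "vmul x (\<lambda>l. \<Sum>s\<in>S. c s * v s l) = (\<lambda>l. \<Sum>s\<in>S. c s * vmul x (v s) l)"
proof
  fix l
  have "vmul x (\<lambda>l. \<Sum>s\<in>S. c s * v s l) l = (\<Sum>i\<in>{1..n}. \<Sum>s\<in>S. c s * (v s i * mul_gen_vec n b x i l))"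
    unfolding vmul_def by (simp add: sum_distrib_left sum_distrib_right mult_ac)
  also have "\<dots> = (\<Sum>s\<in>S. c s * vmul x (v s) l)"
    unfolding vmul_def by (subst sum.swap) (simp add: sum_distrib_left)
  finally show "vmul x (\<lambda>l. \<Sum>s\<in>S. c s * v s l) l = (\<Sum>s\<in>S. c s * vmul x (v s) l)" .
qed

lemma coeff_eq_unit_vec_expansion: "coeff_eq x (\<lambda>l. \<Sum>k\<in>{1..n}. x k * unit_vec k l)"
  unfolding coeff_eq_def unit_vec_def by (simp add: if_distrib[of "\<lambda>c. _ * c"] cong: if_cong)

lemma vmul_expand_left: "vmul x y = (\<lambda>l. \<Sum>k\<in>{1..n}. x k * vmul (unit_vec k) y l)"
proof -
  have "vmul x y = vmul (\<lambda>l. \<Sum>k\<in>{1..n}. x k * unit_vec k l) y"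
    by (rule vmul_coeff_eq[OF coeff_eq_unit_vec_expansion]) (simp add: coeff_eq_def)
  then show ?thesis by (simp only: vmul_lincomb_left)
qed

lemma vmul_expand_right: "vmul x y = (\<lambda>l. \<Sum>i\<in>{1..n}. y i * vmul x (unit_vec i) l)"
proof -
  have "vmul x y = vmul x (\<lambda>l. \<Sum>i\<in>{1..n}. y i * unit_vec i l)"
    by (rule vmul_coeff_eq[OF _ coeff_eq_unit_vec_expansion]) (simp add: coeff_eq_def)
  then show ?thesis by (simp only: vmul_lincomb_right)
qed

lemma vmul_unit_vec_right: "i \<in> {1..n} \<Longrightarrow> vmul x (unit_vec i) = mul_gen_vec n b x i"
  unfolding vmul_def unit_vec_def by (simp add: if_distrib[of "\<lambda>c. c * _"] cong: if_cong)

lemma vmul_unit_vec: "k \<in> {1..n} \<Longrightarrow> i \<in> {1..n} \<Longrightarrow> vmul (unit_vec k) (unit_vec i) l = struct_vec i k l"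
  unfolding vmul_unit_vec_right mul_gen_vec_eq
  by (simp add: unit_vec_def if_distrib[of "\<lambda>c. c * _"] cong: if_cong)

lemma vmul_diff_left: "vmul (\<lambda>l. x l - x' l) y = (\<lambda>l. vmul x y l - vmul x' y l)"
  by (simp add: fun_eq_iff vmul_expand algebra_simps sum_subtractf)

lemma vmul_diff_right: "vmul x (\<lambda>l. y l - y' l) = (\<lambda>l. vmul x y l - vmul x y' l)"
  by (simp add: fun_eq_iff vmul_expand algebra_simps sum_subtractf)

lemma vmul_scale_left: "vmul (\<lambda>l. a * x l) y = (\<lambda>l. a * vmul x y l)"
  by (simp add: fun_eq_iff vmul_expand sum_distrib_left mult_ac)

lemma vmul_scale_right: "vmul x (\<lambda>l. a * y l) = (\<lambda>l. a * vmul x y l)"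
  by (simp add: fun_eq_iff vmul_expand sum_distrib_left mult_ac)

abbreviation wt where "wt \<equiv> weight n r e b"

definition weight_ge :: "nat \<Rightarrow> (nat \<Rightarrow> 'r) \<Rightarrow> bool" where
  "weight_ge m x \<longleftrightarrow> (\<forall>l\<in>{1..n}. x l \<noteq> 0 \<longrightarrow> m \<le> wt l)"

lemma coeff_eq_zero_if_weight_ge:
  assumes "weight_ge m x" "max_weight n r e b < m"
  shows "coeff_eq x (\<lambda>_. 0)"
proof -
  have "wt l \<le> max_weight n r e b" if "l \<in> {1..n}" for l
    unfolding max_weight_def using that by (intro Max_ge) auto
  with assms show ?thesis unfolding weight_ge_def coeff_eq_def by force
qed

lemma weight_ge_vmul:
  assumes "weight_ge m x" "weight_ge m' y"
  shows "weight_ge (m + m') (vmul x y)"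
  unfolding weight_ge_def
proof (intro ballI impI)
  fix l assume "l \<in> {1..n}" "vmul x y l \<noteq> 0"
  then obtain i k where i: "i \<in> {1..n}" and k: "k \<in> {1..n}" and "y i * x k * struct_vec i k l \<noteq> 0"
    unfolding vmul_expand by (meson sum.not_neutral_contains_not_neutral)
  then have "y i \<noteq> 0" "x k \<noteq> 0" "struct_vec i k l \<noteq> 0" by auto
  then have "m' \<le> wt i" "m \<le> wt k" "wt i + wt k \<le> wt l"
    using assms i k admissible_weight_weight[of n r e b]
    unfolding weight_ge_def admissible_weight_def struct_vec_def by (auto split: if_splits)
  then show "m + m' \<le> wt l" by simp
qed

lemma weight_ge_unit_vec: "weight_ge (wt i) (unit_vec i)"
  unfolding weight_ge_def unit_vec_def by auto

lemma weight_ge_power_vec: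
  assumes "i \<in> {1..n}" "r i \<noteq> \<infinity>"
  shows "weight_ge (wt i) (power_vec i)"
  unfolding weight_ge_def
proof (intro ballI impI)
  fix l assume "l \<in> {1..n}" "power_vec i l \<noteq> 0"
  then have "l = i \<or> i < l \<and> l \<le> n \<and> e i l \<noteq> 0"
    by (auto simp: power_vec_def split: if_splits)
  then show "wt i \<le> wt l"
    using admissible_weight_weight[of n r e b] assms unfolding admissible_weight_def by auto
qed

section \<open>Collection\<close>

lemma lin_coeff_eq: "coeff_eq x y \<Longrightarrow> lin n x = lin n y"
  unfolding lin_def coeff_eq_def by (intro sum.cong) auto

lemma coeff_eq_if_lin_eq: "lin n x = lin n y \<Longrightarrow> coeff_eq x y"
  unfolding coeff_eq_def by (metis lookup_lin list.sel(1))

lemma lin_lincomb: "lin n (\<lambda>l. \<Sum>s\<in>S. c s * v s l) = (\<Sum>s\<in>S. smul (c s) (lin n (v s)))"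
  by (rule poly_mapping_eqI) (auto simp: lookup_lin lookup_sum lookup_smul sum.neutral)

lemma lin_diff: "lin n (\<lambda>l. x l - y l) = lin n x - lin n y"
  by (rule poly_mapping_eqI) (auto simp: lookup_lin lookup_minus)

lemma lin_scale: "lin n (\<lambda>l. a * x l) = smul a (lin n x)"
  by (rule poly_mapping_eqI) (auto simp: lookup_lin lookup_smul)

lemma gen_eq_lin_unit_vec: "k \<in> {1..n} \<Longrightarrow> gen k = lin n (unit_vec k)"
  by (rule poly_mapping_eqI) (auto simp: lookup_lin lookup_gen unit_vec_def)

lemma lin_power_vec: "i \<in> {1..n} \<Longrightarrow> lin n (power_vec i) = power_rel n r e i"
  by (rule poly_mapping_eqI)
     (auto simp: power_rel_def lookup_minus lookup_smul lookup_gen lookup_lin lookup_sum_smul_gen power_vec_def)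

lemma lin_struct_vec:
  "i \<in> {1..n} \<Longrightarrow> j \<in> {1..n} \<Longrightarrow> lin n (struct_vec i j) = (\<Sum>l\<in>{max i j<..n}. smul (b i j l) (gen l))"
  by (rule poly_mapping_eqI) (auto simp: lookup_lin lookup_sum_smul_gen struct_vec_def)

abbreviation cword where "cword \<equiv> collect_word n r e b"

definition collect_vec :: "'r falg \<Rightarrow> nat \<Rightarrow> 'r" where
  "collect_vec f = (\<lambda>l. \<Sum>w\<in>Poly_Mapping.keys f. Poly_Mapping.lookup f w * cword w l)"

lemma collection_eq: "collection n r e b f = lin n (red (collect_vec f))"
  unfolding collection_def collect_vec_def ..

lemma collect_vec_superset:
  "finite S \<Longrightarrow> Poly_Mapping.keys f \<subseteq> S \<Longrightarrow> collect_vec f = (\<lambda>l. \<Sum>w\<in>S. Poly_Mapping.lookup f w * cword w l)"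
  unfolding collect_vec_def by (auto intro!: sum.mono_neutral_left simp: in_keys_iff)

lemma collect_vec_add: "collect_vec (f + g) = (\<lambda>l. collect_vec f l + collect_vec g l)"
  by (subst (1 2 3) collect_vec_superset[of "Poly_Mapping.keys f \<union> Poly_Mapping.keys g \<union> Poly_Mapping.keys (f + g)"])
     (auto simp: lookup_add distrib_right sum.distrib)

lemma collect_vec_smul: "collect_vec (smul c f) = (\<lambda>l. c * collect_vec f l)"
  by (subst (1 2) collect_vec_superset[of "Poly_Mapping.keys f"])
     (auto simp: keys_smul lookup_smul sum_distrib_left mult.assoc)

lemma collect_vec_zero: "collect_vec 0 = (\<lambda>_. 0)"
  unfolding collect_vec_def by simp

lemma collect_vec_diff: "collect_vec (f - g) = (\<lambda>l. collect_vec f l - collect_vec g l)"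
  using collect_vec_add[of f "smul (-1) g"] collect_vec_smul[of "-1" g] by (simp add: smul_minus_one)

lemma collect_vec_sum: "collect_vec (sum F S) = (\<lambda>l. \<Sum>s\<in>S. collect_vec (F s) l)"
  by (induction S rule: infinite_finite_induct) (auto simp: collect_vec_zero collect_vec_add)

lemma collect_vec_single: "collect_vec (Poly_Mapping.single w a) = (\<lambda>l. a * cword w l)"
  by (subst collect_vec_superset[of "{w}"]) auto

lemma collect_vec_gen: "collect_vec (gen k) = cword [k]"
  unfolding gen_def collect_vec_single by simp

lemma power_cong_cword_singleton: "power_cong (cword [k]) (unit_vec k)"
  by (simp add: power_cong_sym[OF power_cong_reduce])

lemma power_cong_cword_pair: "i \<in> {1..n} \<Longrightarrow> power_cong (cword [k, i]) (vmul (unit_vec k) (unit_vec i))"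
  unfolding vmul_unit_vec_right
  by (simp add: power_cong_sym[OF power_cong_trans[OF power_cong_reduce power_cong_reduce]])

lemma power_cong_collect_vec_lin: "power_cong (collect_vec (lin n x)) x"
proof -
  have "power_cong (collect_vec (lin n x)) (\<lambda>l. \<Sum>k\<in>{1..n}. x k * unit_vec k l)"
    unfolding lin_def collect_vec_sum collect_vec_smul collect_vec_gen
    by (rule power_cong_lincomb) (rule power_cong_cword_singleton)
  then show ?thesis
    by (rule power_cong_trans[OF _ power_cong_sym[OF power_cong_if_coeff_eq[OF coeff_eq_unit_vec_expansion]]])
qed

lemma power_cong_collect_vec_fmul_lin:
  "power_cong (collect_vec (fmul (lin n x) (lin n y))) (vmul x y)"
proof -
  have expand: "collect_vec (fmul (lin n x) (lin n y)) = (\<lambda>l. \<Sum>i\<in>{1..n}. y i * (\<Sum>k\<in>{1..n}. x k * cword [k, i] l))"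
    by (simp add: lin_def fmul_sum_left fmul_sum_right fmul_smul_left fmul_smul_right
        collect_vec_sum collect_vec_smul fmul_gen_gen collect_vec_single)
  have cong: "power_cong (\<lambda>l. \<Sum>i\<in>{1..n}. y i * (\<Sum>k\<in>{1..n}. x k * cword [k, i] l))
      (\<lambda>l. \<Sum>i\<in>{1..n}. y i * (\<Sum>k\<in>{1..n}. x k * vmul (unit_vec k) (unit_vec i) l))"
    by (intro power_cong_lincomb power_cong_cword_pair) simp
  have "(\<Sum>i\<in>{1..n}. y i * (\<Sum>k\<in>{1..n}. x k * vmul (unit_vec k) (unit_vec i) l)) = vmul x y l" for l
    by (subst (2) vmul_expand_right) (simp add: vmul_expand_left[of x "unit_vec _"])
  with cong show ?thesis unfolding expand by simp
qed

abbreviation I where "I \<equiv> pres_ideal n r e b"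

lemma pres_ideal_zero: "0 \<in> I"
  unfolding pres_ideal_def by (rule ideal_gen.zero)

lemma pres_ideal_add: "x \<in> I \<Longrightarrow> y \<in> I \<Longrightarrow> x + y \<in> I"
  unfolding pres_ideal_def by (rule ideal_gen.add)

lemma pres_ideal_smul: "x \<in> I \<Longrightarrow> smul c x \<in> I"
  unfolding pres_ideal_def by (rule ideal_gen.scal)

lemma pres_ideal_neg: "x \<in> I \<Longrightarrow> - x \<in> I"
  using pres_ideal_smul[of x "-1"] by (simp add: smul_minus_one)

lemma pres_ideal_diff: "x \<in> I \<Longrightarrow> y \<in> I \<Longrightarrow> x - y \<in> I"
  using pres_ideal_add[OF _ pres_ideal_neg] by simp

lemma pres_ideal_sum: "(\<And>s. s \<in> S \<Longrightarrow> F s \<in> I) \<Longrightarrow> sum F S \<in> I"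
  by (induction S rule: infinite_finite_induct)
     (auto simp: pres_ideal_zero pres_ideal_add)

lemma pres_ideal_fmul_left: "x \<in> I \<Longrightarrow> in_F n f \<Longrightarrow> fmul f x \<in> I"
  unfolding pres_ideal_def by (rule ideal_gen.mult_left)

lemma pres_ideal_fmul_right: "x \<in> I \<Longrightarrow> in_F n f \<Longrightarrow> fmul x f \<in> I"
  unfolding pres_ideal_def by (rule ideal_gen.mult_right)

lemma power_rel_in_pres_ideal: "i \<in> {1..n} \<Longrightarrow> r i \<noteq> \<infinity> \<Longrightarrow> power_rel n r e i \<in> I"
  unfolding pres_ideal_def relations_def by (rule ideal_gen.base) blast

lemma product_rel_in_pres_ideal: "i \<in> {1..n} \<Longrightarrow> j \<in> {1..n} \<Longrightarrow> product_rel n b i j \<in> I"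
  unfolding pres_ideal_def relations_def by (rule ideal_gen.base) blast

lemma pres_ideal_trans: "x - y \<in> I \<Longrightarrow> y - z \<in> I \<Longrightarrow> x - z \<in> I"
  using pres_ideal_add[of "x - y" "y - z"] by simp

lemma lin_red_step_mod_pres_ideal: "k \<in> {1..n} \<Longrightarrow> lin n x - lin n (red_step k x) \<in> I"
proof (cases "r k")
  case (enat m)
  assume k: "k \<in> {1..n}"
  have "lin n x - lin n (red_step k x) = smul (fst (cdivmod (x k) m)) (power_rel n r e k)"
    unfolding lin_diff[symmetric] red_step_diff[OF k enat] lin_scale lin_power_vec[OF k] ..
  then show ?thesis using pres_ideal_smul power_rel_in_pres_ideal[OF k] enat by simp
qed (simp add: red_step_infinite pres_ideal_zero)

lemma lin_reduce_mod_pres_ideal: "lin n x - lin n (red x) \<in> I"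
proof -
  have "lin n x - lin n (fold red_step ks x) \<in> I" if "set ks \<subseteq> {1..n}" for ks
    using that
  proof (induction ks arbitrary: x)
    case (Cons k ks)
    then have "k \<in> {1..n}" "lin n (red_step k x) - lin n (fold red_step ks (red_step k x)) \<in> I"
      by auto
    then show ?case
      using pres_ideal_trans[OF lin_red_step_mod_pres_ideal] by simp
  qed (simp add: pres_ideal_zero)
  moreover have "set [1..<Suc n] \<subseteq> {1..n}" by auto
  ultimately show ?thesis unfolding reduce_vec_def by blast
qed

lemma fmul_lin_gen_mod_pres_ideal:
  assumes j: "j \<in> {1..n}"
  shows "fmul (lin n x) (gen j) - lin n (mul_gen_vec n b x j) \<in> I"
proof -
  have "fmul (lin n x) (gen j) = (\<Sum>k\<in>{1..n}. smul (x k) (fmul (gen k) (gen j)))"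
    unfolding lin_def fmul_sum_left fmul_smul_left ..
  moreover have "lin n (mul_gen_vec n b x j) = (\<Sum>k\<in>{1..n}. smul (x k) (lin n (struct_vec j k)))"
    unfolding mul_gen_vec_eq lin_lincomb ..
  ultimately have "fmul (lin n x) (gen j) - lin n (mul_gen_vec n b x j) =
      (\<Sum>k\<in>{1..n}. smul (x k) (fmul (gen k) (gen j) - lin n (struct_vec j k)))"
    by (simp add: smul_diff sum_subtractf)
  also have "\<dots> = (\<Sum>k\<in>{1..n}. smul (x k) (product_rel n b j k))"
    unfolding product_rel_def using j by (intro sum.cong refl) (simp add: lin_struct_vec)
  also have "\<dots> \<in> I"
    using j by (intro pres_ideal_sum pres_ideal_smul product_rel_in_pres_ideal) auto
  finally show ?thesis .
qed

lemma fmul_lin_word_mod_pres_ideal: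
  "set w \<subseteq> {1..n} \<Longrightarrow>
     fmul (lin n x) (Poly_Mapping.single w 1) - lin n (foldl (\<lambda>x j. red (mul_gen_vec n b x j)) x w) \<in> I"
proof (induction w rule: rev_induct)
  case (snoc j w)
  let ?A = "fmul (lin n x) (Poly_Mapping.single w 1)"
  let ?y = "foldl (\<lambda>x j. red (mul_gen_vec n b x j)) x w"
  have j: "j \<in> {1..n}" using snoc.prems by simp
  have "fmul (?A - lin n ?y) (gen j) \<in> I"
    using snoc by (intro pres_ideal_fmul_right in_F_gen j) simp
  then have "fmul ?A (gen j) - fmul (lin n ?y) (gen j) \<in> I"
    by (simp add: fmul_diff_left)
  moreover have "fmul ?A (gen j) = fmul (lin n x) (Poly_Mapping.single (w @ [j]) 1)"
    unfolding gen_def fmul_single_right_append ..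
  ultimately show ?case
    using pres_ideal_trans[OF _ pres_ideal_trans[OF fmul_lin_gen_mod_pres_ideal[OF j] lin_reduce_mod_pres_ideal]]
    by simp
qed (simp add: fmul_Nil_right pres_ideal_zero)

lemma word_mod_pres_ideal:
  assumes "w \<noteq> []" "set w \<subseteq> {1..n}"
  shows "Poly_Mapping.single w 1 - lin n (cword w) \<in> I"
proof -
  obtain i v where w: "w = i # v" using assms(1) by (cases w) auto
  then have i: "i \<in> {1..n}" and v: "set v \<subseteq> {1..n}" using assms(2) by auto
  have eq: "(Poly_Mapping.single w 1 :: 'r falg) = fmul (lin n (unit_vec i)) (Poly_Mapping.single v 1)"
    unfolding w gen_eq_lin_unit_vec[OF i, symmetric] gen_def fmul_single by simp
  show ?thesis
    unfolding eq unfolding w collect_word.simps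
    by (rule pres_ideal_trans[OF fmul_lin_word_mod_pres_ideal[OF v] lin_reduce_mod_pres_ideal])
qed

lemma collection_mod_pres_ideal:
  assumes "in_F n f"
  shows "f - collection n r e b f \<in> I"
proof -
  have "f - lin n (collect_vec f) =
      (\<Sum>w\<in>Poly_Mapping.keys f. smul (Poly_Mapping.lookup f w) (Poly_Mapping.single w 1 - lin n (cword w)))"
    by (subst (1) poly_mapping_expand)
       (simp add: collect_vec_def lin_lincomb smul_diff sum_subtractf smul_single)
  also have "\<dots> \<in> I"
    using assms unfolding in_F_def by (intro pres_ideal_sum pres_ideal_smul word_mod_pres_ideal) auto
  finally show ?thesis
    unfolding collection_eq using pres_ideal_trans[OF _ lin_reduce_mod_pres_ideal] by blast
qed

lemma reduced_form_collection: "reduced_form n r (collection n r e b f)"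
  unfolding collection_eq reduced_form_def using reduced_vec_reduce[unfolded reduced_vec_def] by blast

lemma in_F_collection: "in_F n (collection n r e b f)"
  unfolding collection_eq by (rule in_F_lin)

section \<open>Consistency implies the test equations\<close>

abbreviation r_coeff :: "nat \<Rightarrow> 'r" where
  "r_coeff j \<equiv> of_nat (the_enat (r j))"

abbreviation coll where "coll \<equiv> collection n r e b"

lemma collection_minus_mod_pres_ideal: "in_F n f \<Longrightarrow> coll f - f \<in> I"
  using pres_ideal_neg[OF collection_mod_pres_ideal] by simp

lemma consistent_collection_eq:
  assumes "consistent n r e b" "in_F n f" "in_F n g" "f - g \<in> I"
  shows "coll f = coll g"
proof -
  have "g - coll f = - (f - g) + (f - coll f)" by simp
  also have "\<dots> \<in> I"
    by (intro pres_ideal_add pres_ideal_neg assms(4) collection_mod_pres_ideal assms(2))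
  finally show ?thesis
    using assms(1,3) reduced_form_collection collection_mod_pres_ideal unfolding consistent_def by blast
qed

lemma fmul_collection_left_mod_pres_ideal: "in_F n f \<Longrightarrow> in_F n g \<Longrightarrow> fmul f (coll g) - fmul f g \<in> I"
  unfolding fmul_diff_right[symmetric] by (intro pres_ideal_fmul_left collection_minus_mod_pres_ideal)

lemma fmul_collection_right_mod_pres_ideal: "in_F n f \<Longrightarrow> in_F n g \<Longrightarrow> fmul (coll g) f - fmul g f \<in> I"
  unfolding fmul_diff_left[symmetric] by (intro pres_ideal_fmul_right collection_minus_mod_pres_ideal)

lemma smul_collection_mod_pres_ideal: "in_F n g \<Longrightarrow> smul a (coll g) - smul a g \<in> I"
  unfolding smul_diff[symmetric] by (intro pres_ideal_smul collection_minus_mod_pres_ideal)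

lemma consistent_imp_test_equations:
  assumes cons: "consistent n r e b"
  shows "test_equations n r e b"
proof -
  have coll_eq: "coll f = coll g" if "in_F n f" "in_F n g" "f - h \<in> I" "g - h \<in> I" for f g h
    using consistent_collection_eq[OF cons that(1,2)] pres_ideal_diff[OF that(3,4)] by simp
  have gen: "in_F n (gen i)" if "i \<in> {1..n}" for i
    using that by (rule in_F_gen)
  show ?thesis unfolding test_equations_def Let_def
  proof (intro conjI ballI impI)
    fix i j k assume "i \<in> {1..n}" "j \<in> {1..n}" "k \<in> {1..n}"
    note F = gen[OF this(1)] gen[OF this(2)] gen[OF this(3)]
    have assoc: "fmul (fmul (gen k) (gen j)) (gen i) = fmul (gen k) (fmul (gen j) (gen i))"
      by (simp add: gen_def fmul_single)
    show "coll (fmul (gen k) (coll (fmul (gen j) (gen i)))) = coll (fmul (coll (fmul (gen k) (gen j))) (gen i))"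
      using fmul_collection_left_mod_pres_ideal[OF F(3) in_F_fmul[OF F(2,1)]]
        fmul_collection_right_mod_pres_ideal[OF F(1) in_F_fmul[OF F(3,2)]] unfolding assoc
      by (intro coll_eq[where h = "fmul (gen k) (fmul (gen j) (gen i))"] in_F_fmul in_F_collection F) simp_all
  next
    fix i j assume "i \<in> {1..n}" "j \<in> {1..n}"
    note F = gen[OF this(1)] gen[OF this(2)]
    show "coll (smul (r_coeff j) (coll (fmul (gen j) (gen i)))) =
        coll (fmul (coll (smul (r_coeff j) (gen j))) (gen i))"
      using smul_collection_mod_pres_ideal[OF in_F_fmul[OF F(2,1)]]
        fmul_collection_right_mod_pres_ideal[OF F(1) in_F_smul[OF F(2)]]
      by (intro coll_eq[where h = "smul (r_coeff j) (fmul (gen j) (gen i))"]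
          in_F_fmul in_F_smul in_F_collection F) (simp_all add: fmul_smul_left)
  next
    fix i j assume "i \<in> {1..n}" "j \<in> {1..n}"
    note F = gen[OF this(1)] gen[OF this(2)]
    show "coll (smul (r_coeff i) (coll (fmul (gen j) (gen i)))) =
        coll (fmul (gen j) (coll (smul (r_coeff i) (gen i))))"
      using smul_collection_mod_pres_ideal[OF in_F_fmul[OF F(2,1)]]
        fmul_collection_left_mod_pres_ideal[OF F(2) in_F_smul[OF F(1)]]
      by (intro coll_eq[where h = "smul (r_coeff i) (fmul (gen j) (gen i))"]
          in_F_fmul in_F_smul in_F_collection F) (simp_all add: fmul_smul_right)
  qed
qed

section \<open>The test equations imply consistency\<close>

lemma power_cong_if_collection_eq: "coll f = coll g \<Longrightarrow> power_cong (collect_vec f) (collect_vec g)"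
  unfolding collection_eq using coeff_eq_if_lin_eq coeff_eq_reduce_iff by blast

lemma power_cong_collect_vec_collection: "power_cong (collect_vec (coll f)) (collect_vec f)"
  unfolding collection_eq by (rule power_cong_trans[OF power_cong_collect_vec_lin power_cong_sym[OF power_cong_reduce]])

lemma power_cong_collect_vec_gen_gen:
  "i \<in> {1..n} \<Longrightarrow> j \<in> {1..n} \<Longrightarrow>
     power_cong (collect_vec (fmul (gen j) (gen i))) (vmul (unit_vec j) (unit_vec i))"
  using power_cong_collect_vec_fmul_lin[of "unit_vec j" "unit_vec i"] by (simp add: gen_eq_lin_unit_vec)

lemma power_cong_collect_vec_collection_gen_gen:
  "i \<in> {1..n} \<Longrightarrow> j \<in> {1..n} \<Longrightarrow>
     power_cong (collect_vec (coll (fmul (gen j) (gen i)))) (vmul (unit_vec j) (unit_vec i))"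
  by (rule power_cong_trans[OF power_cong_collect_vec_collection power_cong_collect_vec_gen_gen])

definition power_rhs_vec :: "nat \<Rightarrow> nat \<Rightarrow> 'r" where
  "power_rhs_vec j = (\<lambda>l. if j < l \<and> l \<le> n then e j l else 0)"

lemma power_vec_eq: "power_vec j = (\<lambda>l. r_coeff j * unit_vec j l - power_rhs_vec j l)"
  unfolding power_vec_def power_rhs_vec_def unit_vec_def by (auto simp: fun_eq_iff)

lemma power_cong_power_rhs_vec:
  assumes "j \<in> {1..n}" "r j \<noteq> \<infinity>"
  shows "power_cong (collect_vec (smul (r_coeff j) (gen j))) (power_rhs_vec j)"
proof -
  have "power_cong (collect_vec (smul (r_coeff j) (gen j))) (\<lambda>l. r_coeff j * unit_vec j l)"
    unfolding collect_vec_smul collect_vec_gen by (rule power_cong_scale[OF power_cong_cword_singleton])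
  moreover have "j \<in> power_idx 0" using assms unfolding power_idx_def by auto
  then have "power_cong (\<lambda>l. r_coeff j * unit_vec j l) (power_rhs_vec j)"
    using power_vec_in_power_span unfolding power_vec_eq power_cong_def by simp
  ultimately show ?thesis by (rule power_cong_trans)
qed

lemma vmul_in_power_span_leftI:
  assumes "in_power_span t z" "\<And>i. i \<in> power_idx t \<Longrightarrow> in_power_span 0 (vmul (power_vec i) y)"
  shows "in_power_span 0 (vmul z y)"
proof -
  obtain c where "\<forall>l\<in>{1..n}. z l = (\<Sum>i\<in>power_idx t. c i * power_vec i l)"
    using assms(1) unfolding in_power_span_def by blast
  then have "vmul z y = vmul (\<lambda>l. \<Sum>i\<in>power_idx t. c i * power_vec i l) y"
    by (intro vmul_coeff_eq) (simp_all add: coeff_eq_def)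
  then show ?thesis
    unfolding vmul_lincomb_left using assms(2) by (simp add: in_power_span_lincomb)
qed

lemma vmul_in_power_span_rightI:
  assumes "in_power_span t z" "\<And>i. i \<in> power_idx t \<Longrightarrow> in_power_span 0 (vmul y (power_vec i))"
  shows "in_power_span 0 (vmul y z)"
proof -
  obtain c where "\<forall>l\<in>{1..n}. z l = (\<Sum>i\<in>power_idx t. c i * power_vec i l)"
    using assms(1) unfolding in_power_span_def by blast
  then have "vmul y z = vmul y (\<lambda>l. \<Sum>i\<in>power_idx t. c i * power_vec i l)"
    by (intro vmul_coeff_eq) (simp_all add: coeff_eq_def)
  then show ?thesis
    unfolding vmul_lincomb_right using assms(2) by (simp add: in_power_span_lincomb)
qed

lemma in_power_span_if_weight_exceeds:
  "weight_ge m x \<Longrightarrow> max_weight n r e b < m \<Longrightarrow> in_power_span 0 x"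
  by (intro in_power_span_if_coeff_eq_zero coeff_eq_zero_if_weight_ge)

context
  assumes tests: "test_equations n r e b"
begin

lemma test_assoc:
  "i \<in> {1..n} \<Longrightarrow> j \<in> {1..n} \<Longrightarrow> k \<in> {1..n} \<Longrightarrow> wt k + wt j + wt i \<le> max_weight n r e b \<Longrightarrow>
     coll (fmul (gen k) (coll (fmul (gen j) (gen i)))) = coll (fmul (coll (fmul (gen k) (gen j))) (gen i))"
  using tests unfolding test_equations_def Let_def by blast

lemma test_power_left:
  "i \<in> {1..n} \<Longrightarrow> j \<in> {1..n} \<Longrightarrow> r j \<noteq> \<infinity> \<Longrightarrow> wt j + wt i \<le> max_weight n r e b \<Longrightarrow>
     coll (smul (r_coeff j) (coll (fmul (gen j) (gen i)))) = coll (fmul (coll (smul (r_coeff j) (gen j))) (gen i))"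
  using tests unfolding test_equations_def Let_def by blast

lemma test_power_right:
  "i \<in> {1..n} \<Longrightarrow> j \<in> {1..n} \<Longrightarrow> r i \<noteq> \<infinity> \<Longrightarrow> wt j + wt i \<le> max_weight n r e b \<Longrightarrow>
     coll (smul (r_coeff i) (coll (fmul (gen j) (gen i)))) = coll (fmul (gen j) (coll (smul (r_coeff i) (gen i))))"
  using tests unfolding test_equations_def Let_def by blast

lemma vmul_power_left_cong:
  assumes i: "i \<in> {1..n}" and j: "j \<in> {1..n}" "r j \<noteq> \<infinity>" and w: "wt j + wt i \<le> max_weight n r e b"
  shows "power_cong (\<lambda>l. r_coeff j * vmul (unit_vec j) (unit_vec i) l) (vmul (red (power_rhs_vec j)) (unit_vec i))"
proof -
  let ?y = "collect_vec (smul (r_coeff j) (gen j))"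
  have "power_cong (\<lambda>l. r_coeff j * vmul (unit_vec j) (unit_vec i) l)
      (collect_vec (smul (r_coeff j) (coll (fmul (gen j) (gen i)))))"
    unfolding collect_vec_smul
    by (rule power_cong_sym, rule power_cong_scale[OF power_cong_collect_vec_collection_gen_gen[OF i j(1)]])
  also have "power_cong \<dots> (collect_vec (fmul (coll (smul (r_coeff j) (gen j))) (gen i)))"
    by (rule power_cong_if_collection_eq[OF test_power_left[OF i j w]])
  also have "power_cong \<dots> (vmul (red ?y) (unit_vec i))"
    using power_cong_collect_vec_fmul_lin[of "red ?y" "unit_vec i"]
    by (simp add: collection_eq gen_eq_lin_unit_vec[OF i])
  also have "vmul (red ?y) (unit_vec i) = vmul (red (power_rhs_vec j)) (unit_vec i)"
    by (rule vmul_coeff_eq[OF iffD2[OF coeff_eq_reduce_iff power_cong_power_rhs_vec[OF j]]])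
       (simp add: coeff_eq_def)
  finally show ?thesis .
qed

lemma vmul_power_right_cong:
  assumes i: "i \<in> {1..n}" "r i \<noteq> \<infinity>" and j: "j \<in> {1..n}" and w: "wt j + wt i \<le> max_weight n r e b"
  shows "power_cong (\<lambda>l. r_coeff i * vmul (unit_vec j) (unit_vec i) l) (vmul (unit_vec j) (red (power_rhs_vec i)))"
proof -
  let ?y = "collect_vec (smul (r_coeff i) (gen i))"
  have "power_cong (\<lambda>l. r_coeff i * vmul (unit_vec j) (unit_vec i) l)
      (collect_vec (smul (r_coeff i) (coll (fmul (gen j) (gen i)))))"
    unfolding collect_vec_smul
    by (rule power_cong_sym, rule power_cong_scale[OF power_cong_collect_vec_collection_gen_gen[OF i(1) j]])
  also have "power_cong \<dots> (collect_vec (fmul (gen j) (coll (smul (r_coeff i) (gen i)))))"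
    by (rule power_cong_if_collection_eq[OF test_power_right[OF i(1) j i(2) w]])
  also have "power_cong \<dots> (vmul (unit_vec j) (red ?y))"
    using power_cong_collect_vec_fmul_lin[of "unit_vec j" "red ?y"]
    by (simp add: collection_eq gen_eq_lin_unit_vec[OF j])
  also have "vmul (unit_vec j) (red ?y) = vmul (unit_vec j) (red (power_rhs_vec i))"
    by (rule vmul_coeff_eq[OF _ iffD2[OF coeff_eq_reduce_iff power_cong_power_rhs_vec[OF i]]])
       (simp add: coeff_eq_def)
  finally show ?thesis .
qed

text \<open>By descending induction on \<open>j\<close>: the right-hand side of the power relation of \<open>a\<^sub>j\<close> is
  reduced using only power relations of larger index. Products of weight above the maximal
  weight vanish, and all others are covered by the test equations.\<close>

lemma vmul_power_vec_left_in_power_span: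
  assumes "j \<in> power_idx 0"
  shows "in_power_span 0 (vmul (power_vec j) y)"
  using assms
proof (induction "n - j" arbitrary: j y rule: less_induct)
  case less
  then have j: "j \<in> {1..n}" "r j \<noteq> \<infinity>" unfolding power_idx_def by auto
  have rhs: "in_power_span 0 (vmul (\<lambda>l. power_rhs_vec j l - red (power_rhs_vec j) l) (unit_vec i))" for i
  proof (rule vmul_in_power_span_leftI[OF reduce_diff_in_power_span])
    show "power_rhs_vec j k = 0" if "1 \<le> k" "k \<le> j" for k
      using that by (simp add: power_rhs_vec_def)
  next
    fix i' assume "i' \<in> power_idx j"
    then show "in_power_span 0 (vmul (power_vec i') (unit_vec i))"
      by (intro less.hyps) (auto simp: power_idx_def)
  qed
  have "in_power_span 0 (vmul (power_vec j) (unit_vec i))" if i: "i \<in> {1..n}" for i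
  proof (cases "wt j + wt i \<le> max_weight n r e b")
    case True
    have "vmul (power_vec j) (unit_vec i) = (\<lambda>l.
        (r_coeff j * vmul (unit_vec j) (unit_vec i) l - vmul (red (power_rhs_vec j)) (unit_vec i) l) -
        vmul (\<lambda>l. power_rhs_vec j l - red (power_rhs_vec j) l) (unit_vec i) l)"
      unfolding power_vec_eq vmul_diff_left vmul_scale_left by simp
    then show ?thesis
      using in_power_span_diff[OF vmul_power_left_cong[OF i j True, unfolded power_cong_def] rhs] by simp
  next
    case False
    then show ?thesis
      by (intro in_power_span_if_weight_exceeds[OF weight_ge_vmul[OF weight_ge_power_vec[OF j] weight_ge_unit_vec]])
         simp
  qed
  then show ?case
    by (subst vmul_expand_right) (rule in_power_span_lincomb)
qed

lemma vmul_power_vec_right_in_power_span: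
  assumes "i \<in> power_idx 0"
  shows "in_power_span 0 (vmul y (power_vec i))"
  using assms
proof (induction "n - i" arbitrary: i y rule: less_induct)
  case less
  then have i: "i \<in> {1..n}" "r i \<noteq> \<infinity>" unfolding power_idx_def by auto
  have rhs: "in_power_span 0 (vmul (unit_vec j) (\<lambda>l. power_rhs_vec i l - red (power_rhs_vec i) l))" for j
  proof (rule vmul_in_power_span_rightI[OF reduce_diff_in_power_span])
    show "power_rhs_vec i k = 0" if "1 \<le> k" "k \<le> i" for k
      using that by (simp add: power_rhs_vec_def)
  next
    fix i' assume "i' \<in> power_idx i"
    then show "in_power_span 0 (vmul (unit_vec j) (power_vec i'))"
      by (intro less.hyps) (auto simp: power_idx_def)
  qed
  have "in_power_span 0 (vmul (unit_vec j) (power_vec i))" if j: "j \<in> {1..n}" for j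
  proof (cases "wt j + wt i \<le> max_weight n r e b")
    case True
    have "vmul (unit_vec j) (power_vec i) = (\<lambda>l.
        (r_coeff i * vmul (unit_vec j) (unit_vec i) l - vmul (unit_vec j) (red (power_rhs_vec i)) l) -
        vmul (unit_vec j) (\<lambda>l. power_rhs_vec i l - red (power_rhs_vec i) l) l)"
      unfolding power_vec_eq vmul_diff_right vmul_scale_right by simp
    then show ?thesis
      using in_power_span_diff[OF vmul_power_right_cong[OF i j True, unfolded power_cong_def] rhs] by simp
  next
    case False
    then show ?thesis
      by (intro in_power_span_if_weight_exceeds[OF weight_ge_vmul[OF weight_ge_unit_vec weight_ge_power_vec[OF i]]])
         simp
  qed
  then show ?case
    by (subst vmul_expand_left) (rule in_power_span_lincomb)
qed

lemma vmul_in_power_span_left: "in_power_span 0 z \<Longrightarrow> in_power_span 0 (vmul z y)"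
  by (rule vmul_in_power_span_leftI[OF _ vmul_power_vec_left_in_power_span])

lemma vmul_in_power_span_right: "in_power_span 0 z \<Longrightarrow> in_power_span 0 (vmul y z)"
  by (rule vmul_in_power_span_rightI[OF _ vmul_power_vec_right_in_power_span])

lemma vmul_power_cong_left: "power_cong x x' \<Longrightarrow> power_cong (vmul x y) (vmul x' y)"
  unfolding power_cong_def vmul_diff_left[symmetric] by (rule vmul_in_power_span_left)

lemma vmul_power_cong_right: "power_cong y y' \<Longrightarrow> power_cong (vmul x y) (vmul x y')"
  unfolding power_cong_def vmul_diff_right[symmetric] by (rule vmul_in_power_span_right)

lemma vmul_assoc_unit_vec:
  assumes k: "k \<in> {1..n}" and j: "j \<in> {1..n}" and i: "i \<in> {1..n}"
  shows "power_cong (vmul (unit_vec k) (vmul (unit_vec j) (unit_vec i)))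
                    (vmul (vmul (unit_vec k) (unit_vec j)) (unit_vec i))"
proof (cases "wt k + wt j + wt i \<le> max_weight n r e b")
  case True
  let ?x = "collect_vec (fmul (gen j) (gen i))" and ?y = "collect_vec (fmul (gen k) (gen j))"
  have "power_cong (vmul (unit_vec k) (vmul (unit_vec j) (unit_vec i))) (vmul (unit_vec k) (red ?x))"
    by (rule vmul_power_cong_right, rule power_cong_sym,
        rule power_cong_trans[OF power_cong_sym[OF power_cong_reduce] power_cong_collect_vec_gen_gen[OF i j]])
  also have "power_cong \<dots> (collect_vec (fmul (gen k) (coll (fmul (gen j) (gen i)))))"
    using power_cong_sym[OF power_cong_collect_vec_fmul_lin[of "unit_vec k" "red ?x"]]
    by (simp add: collection_eq gen_eq_lin_unit_vec[OF k])
  also have "power_cong \<dots> (collect_vec (fmul (coll (fmul (gen k) (gen j))) (gen i)))"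
    by (rule power_cong_if_collection_eq[OF test_assoc[OF i j k True]])
  also have "power_cong \<dots> (vmul (red ?y) (unit_vec i))"
    using power_cong_collect_vec_fmul_lin[of "red ?y" "unit_vec i"]
    by (simp add: collection_eq gen_eq_lin_unit_vec[OF i])
  also have "power_cong \<dots> (vmul (vmul (unit_vec k) (unit_vec j)) (unit_vec i))"
    by (intro vmul_power_cong_left
        power_cong_trans[OF power_cong_sym[OF power_cong_reduce] power_cong_collect_vec_gen_gen[OF j k]])
  finally show ?thesis .
next
  case False
  have "in_power_span 0 (vmul (unit_vec k) (vmul (unit_vec j) (unit_vec i)))"
    using False by (intro in_power_span_if_weight_exceeds[OF
        weight_ge_vmul[OF weight_ge_unit_vec weight_ge_vmul[OF weight_ge_unit_vec weight_ge_unit_vec]]]) simp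
  moreover have "in_power_span 0 (vmul (vmul (unit_vec k) (unit_vec j)) (unit_vec i))"
    using False by (intro in_power_span_if_weight_exceeds[OF
        weight_ge_vmul[OF weight_ge_vmul[OF weight_ge_unit_vec weight_ge_unit_vec] weight_ge_unit_vec]]) simp
  ultimately show ?thesis unfolding power_cong_def by (rule in_power_span_diff)
qed

lemma vmul_assoc: "power_cong (vmul x (vmul y z)) (vmul (vmul x y) z)"
proof -
  have left: "power_cong (vmul x (vmul (unit_vec j) (unit_vec i))) (vmul (vmul x (unit_vec j)) (unit_vec i))"
    if "j \<in> {1..n}" "i \<in> {1..n}" for x j i
  proof -
    have "power_cong (\<lambda>l. \<Sum>k\<in>{1..n}. x k * vmul (unit_vec k) (vmul (unit_vec j) (unit_vec i)) l)
        (\<lambda>l. \<Sum>k\<in>{1..n}. x k * vmul (vmul (unit_vec k) (unit_vec j)) (unit_vec i) l)"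
      using that by (intro power_cong_lincomb vmul_assoc_unit_vec) auto
    then show ?thesis
      by (simp add: vmul_expand_left[of x "vmul (unit_vec j) (unit_vec i)"]
          vmul_expand_left[of x "unit_vec j"] vmul_lincomb_left)
  qed
  have middle: "power_cong (vmul x (vmul y (unit_vec i))) (vmul (vmul x y) (unit_vec i))"
    if "i \<in> {1..n}" for i
  proof -
    have "power_cong (\<lambda>l. \<Sum>j\<in>{1..n}. y j * vmul x (vmul (unit_vec j) (unit_vec i)) l)
        (\<lambda>l. \<Sum>j\<in>{1..n}. y j * vmul (vmul x (unit_vec j)) (unit_vec i) l)"
      using that by (intro power_cong_lincomb left) auto
    then show ?thesis
      by (simp add: vmul_expand_left[of y "unit_vec i"] vmul_lincomb_right
          vmul_expand_right[of x y] vmul_lincomb_left)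
  qed
  have "power_cong (\<lambda>l. \<Sum>i\<in>{1..n}. z i * vmul x (vmul y (unit_vec i)) l)
      (\<lambda>l. \<Sum>i\<in>{1..n}. z i * vmul (vmul x y) (unit_vec i) l)"
    by (intro power_cong_lincomb middle) auto
  then show ?thesis
    by (simp add: vmul_expand_right[of y z] vmul_lincomb_right vmul_expand_right[of "vmul x y" z])
qed

lemma power_cong_cword_snoc:
  assumes "v \<noteq> []" "j \<in> {1..n}"
  shows "power_cong (cword (v @ [j])) (vmul (cword v) (unit_vec j))"
proof -
  obtain i w where v: "v = i # w" using assms(1) by (cases v) auto
  let ?y = "foldl (\<lambda>x j. red (mul_gen_vec n b x j)) (unit_vec i) w"
  have "cword (v @ [j]) = red (red (vmul ?y (unit_vec j)))" "cword v = red ?y"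
    unfolding v vmul_unit_vec_right[OF assms(2)] by simp_all
  then show ?thesis
    using power_cong_trans[OF power_cong_reduce power_cong_reduce, of "vmul ?y (unit_vec j)"]
      vmul_power_cong_left[OF power_cong_reduce, of ?y "unit_vec j"]
    by (metis power_cong_sym power_cong_trans)
qed

lemma power_cong_cword_append:
  "v \<noteq> [] \<Longrightarrow> v' \<noteq> [] \<Longrightarrow> set v' \<subseteq> {1..n} \<Longrightarrow> power_cong (cword (v @ v')) (vmul (cword v) (cword v'))"
proof (induction v' rule: rev_induct)
  case (snoc j v')
  then have j: "j \<in> {1..n}" by simp
  show ?case
  proof (cases "v' = []")
    case True
    then show ?thesis
      using power_cong_trans[OF power_cong_cword_snoc[OF snoc.prems(1) j]
          vmul_power_cong_right[OF power_cong_sym[OF power_cong_cword_singleton]]] by simp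
  next
    case False
    have "power_cong (cword ((v @ v') @ [j])) (vmul (cword (v @ v')) (unit_vec j))"
      using snoc.prems by (intro power_cong_cword_snoc j) simp
    also have "power_cong \<dots> (vmul (vmul (cword v) (cword v')) (unit_vec j))"
      using snoc False by (intro vmul_power_cong_left) simp
    also have "power_cong \<dots> (vmul (cword v) (vmul (cword v') (unit_vec j)))"
      by (rule power_cong_sym[OF vmul_assoc])
    also have "power_cong \<dots> (vmul (cword v) (cword (v' @ [j])))"
      by (rule vmul_power_cong_right, rule power_cong_sym, rule power_cong_cword_snoc[OF False j])
    finally show ?thesis by simp
  qed
qed simp

lemma power_cong_collect_vec_fmul:
  assumes "in_F n p" "in_F n q"
  shows "power_cong (collect_vec (fmul p q)) (vmul (collect_vec p) (collect_vec q))"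
proof -
  have "power_cong
      (\<lambda>l. \<Sum>u\<in>Poly_Mapping.keys p. Poly_Mapping.lookup p u *
         (\<Sum>v\<in>Poly_Mapping.keys q. Poly_Mapping.lookup q v * cword (u @ v) l))
      (\<lambda>l. \<Sum>u\<in>Poly_Mapping.keys p. Poly_Mapping.lookup p u *
         (\<Sum>v\<in>Poly_Mapping.keys q. Poly_Mapping.lookup q v * vmul (cword u) (cword v) l))"
    using assms unfolding in_F_def by (intro power_cong_lincomb power_cong_cword_append) auto
  moreover have "collect_vec (fmul p q) = (\<lambda>l. \<Sum>u\<in>Poly_Mapping.keys p. Poly_Mapping.lookup p u *
      (\<Sum>v\<in>Poly_Mapping.keys q. Poly_Mapping.lookup q v * cword (u @ v) l))"
    unfolding fmul_def collect_vec_sum collect_vec_single by (simp add: sum_distrib_left mult.assoc)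
  moreover have "vmul (collect_vec p) (collect_vec q) = (\<lambda>l. \<Sum>u\<in>Poly_Mapping.keys p. Poly_Mapping.lookup p u *
      (\<Sum>v\<in>Poly_Mapping.keys q. Poly_Mapping.lookup q v * vmul (cword u) (cword v) l))"
    unfolding collect_vec_def vmul_lincomb_left vmul_lincomb_right ..
  ultimately show ?thesis by simp
qed

lemma collect_vec_in_power_span_if_pres_ideal:
  "x \<in> ideal_gen n (relations n r e b) \<Longrightarrow> in_F n x \<and> in_power_span 0 (collect_vec x)"
proof (induction rule: ideal_gen.induct)
  case (base s)
  then show ?case unfolding relations_def
  proof (elim UnE CollectE exE conjE)
    fix i assume s: "s = power_rel n r e i" and i: "i \<in> {1..n}" "r i \<noteq> \<infinity>"
    have "i \<in> power_idx 0" using i unfolding power_idx_def by auto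
    then show "in_F n s \<and> in_power_span 0 (collect_vec s)"
      unfolding s lin_power_vec[OF i(1), symmetric]
      by (intro conjI in_F_lin in_power_span_power_cong[OF power_cong_collect_vec_lin]
          power_vec_in_power_span)
  next
    fix i j assume s: "s = product_rel n b i j" and i: "i \<in> {1..n}" and j: "j \<in> {1..n}"
    have s': "s = fmul (gen j) (gen i) - lin n (struct_vec i j)"
      unfolding s product_rel_def lin_struct_vec[OF i j] ..
    have "power_cong (collect_vec s) (\<lambda>l. vmul (unit_vec j) (unit_vec i) l - struct_vec i j l)"
      unfolding s' collect_vec_diff
      by (rule power_cong_diff[OF power_cong_collect_vec_gen_gen[OF i j] power_cong_collect_vec_lin])
    moreover have "in_power_span 0 (\<lambda>l. vmul (unit_vec j) (unit_vec i) l - struct_vec i j l)"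
      by (rule in_power_span_if_coeff_eq_zero) (simp add: coeff_eq_def vmul_unit_vec[OF j i])
    moreover have "in_F n s"
      unfolding s' using i j by (intro in_F_diff in_F_fmul in_F_gen in_F_lin)
    ultimately show "in_F n s \<and> in_power_span 0 (collect_vec s)"
      using in_power_span_power_cong by blast
  qed
next
  case zero
  then show ?case by (simp add: collect_vec_zero in_power_span_zero)
next
  case (add x y)
  then show ?case by (simp add: collect_vec_add in_power_span_add in_F_add)
next
  case (scal x c)
  then show ?case by (simp add: collect_vec_smul in_power_span_scale in_F_smul)
next
  case (mult_left x f)
  then show ?case
    by (meson in_F_fmul in_power_span_power_cong power_cong_collect_vec_fmul vmul_in_power_span_right)
next
  case (mult_right x f)
  then show ?case
    by (meson in_F_fmul in_power_span_power_cong power_cong_collect_vec_fmul vmul_in_power_span_left)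
qed

lemma test_equations_imp_consistent: "consistent n r e b"
  unfolding consistent_def
proof (intro allI impI ex1I)
  fix f :: "'r falg" assume f: "in_F n f"
  show "reduced_form n r (coll f) \<and> f - coll f \<in> I"
    using reduced_form_collection collection_mod_pres_ideal[OF f] by blast
  fix v assume v: "reduced_form n r v \<and> f - v \<in> I"
  then obtain x where x: "reduced_vec x" and v_eq: "v = lin n x"
    unfolding reduced_form_def reduced_vec_def by blast
  have "v - coll f = (f - coll f) - (f - v)" by simp
  also have "\<dots> \<in> I" using pres_ideal_diff collection_mod_pres_ideal[OF f] v by blast
  finally have "in_power_span 0 (collect_vec (v - coll f))"
    using collect_vec_in_power_span_if_pres_ideal unfolding pres_ideal_def by blast
  then have "power_cong (collect_vec (lin n x)) (collect_vec (lin n (red (collect_vec f))))"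
    unfolding power_cong_def collect_vec_diff v_eq collection_eq .
  then have "power_cong x (red (collect_vec f))"
    by (meson power_cong_collect_vec_lin power_cong_sym power_cong_trans)
  then have "coeff_eq x (red (collect_vec f))"
    by (rule reduced_vec_power_cong_unique[OF x reduced_vec_reduce])
  then show "v = coll f" unfolding v_eq collection_eq by (rule lin_coeff_eq)
qed

end

lemma consistent_iff_test_equations: "consistent n r e b \<longleftrightarrow> test_equations n r e b"
  using consistent_imp_test_equations test_equations_imp_consistent by blast

end

lemma int_unique_division:
  assumes "0 < m"
  shows "\<exists>!p. (x::int) = of_nat m * fst p + snd p \<and> snd p \<in> of_nat ` {0..<m}"
proof (rule ex1I[of _ "(x div int m, x mod int m)"])
  have "x mod int m \<in> of_nat ` {0..<m}"
    using assms by (intro image_eqI[of _ _ "nat (x mod int m)"]) (simp_all add: nat_less_iff)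
  then show "x = of_nat m * fst (x div int m, x mod int m) + snd (x div int m, x mod int m) \<and>
      snd (x div int m, x mod int m) \<in> of_nat ` {0..<m}"
    by simp
next
  fix p :: "int \<times> int"
  assume "x = of_nat m * fst p + snd p \<and> snd p \<in> of_nat ` {0..<m}"
  then have "x div int m = fst p" "x mod int m = snd p"
    by (auto intro: int_div_pos_eq int_mod_pos_eq)
  then show "p = (x div int m, x mod int m)" by (simp add: prod_eq_iff)
qed

theorem theorem2:
  shows "(\<forall>n (r :: nat \<Rightarrow> enat) (e :: nat \<Rightarrow> nat \<Rightarrow> int) b.
            nilpotent_presentation n r e b \<longrightarrow>
              (consistent n r e b \<longleftrightarrow> test_equations n r e b)) \<and>
         (\<forall>n (e :: nat \<Rightarrow> nat \<Rightarrow> 'k::field) b.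
            nilpotent_presentation n (\<lambda>_. \<infinity>) e b \<longrightarrow>
              (consistent n (\<lambda>_. \<infinity>) e b \<longleftrightarrow> test_equations n (\<lambda>_. \<infinity>) e b))"
proof (intro conjI allI impI)
  fix n and r :: "nat \<Rightarrow> enat" and e :: "nat \<Rightarrow> nat \<Rightarrow> int" and b
  assume np: "nilpotent_presentation n r e b"
  interpret presentation n r e b
  proof
    fix k m and x :: int
    assume k: "k \<in> {1..n}" and rk: "r k = enat m"
    have "r k \<noteq> 0" using np k unfolding nilpotent_presentation_def by blast
    with rk have "0 < m" by (simp add: zero_enat_def)
    then show "\<exists>!p. x = of_nat m * fst p + snd p \<and> snd p \<in> of_nat ` {0..<m}"
      by (rule int_unique_division)
  qed
  show "consistent n r e b \<longleftrightarrow> test_equations n r e b"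
    by (rule consistent_iff_test_equations)
next
  fix n and e :: "nat \<Rightarrow> nat \<Rightarrow> 'k::field" and b
  interpret presentation n "\<lambda>_. \<infinity>" e b
    by unfold_locales simp
  show "consistent n (\<lambda>_. \<infinity>) e b \<longleftrightarrow> test_equations n (\<lambda>_. \<infinity>) e b"
    by (rule consistent_iff_test_equations)
qed

end
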